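(* Let $(F_i)_{i\in\mathbb{N}}$ be feedback functions $F_i\colon\mathbb{N}\to(0,\infty)$ and $(X_i(0))_{i\in\mathbb{N}}\subset\mathbb{N}$ initial values. Assume there is an infinite set $B\subset\mathbb{N}$ with $$\sum_{k=1}^\infty\sup_{i\in B}\frac{1}{F_i(k)}<\infty.$$ Then: 1. $\lim_{A\to\infty}\mathbb{P}\big(X^{(A)}_1(\infty)=X_1(0)\big)=1$. 2. If in addition $\limsup_{i\to\infty}F_i(X_i(0))<\infty$, then $\frac1A\#\{i\in[A]:X_i^{(A)}(\infty)=X_i(0)\}\to1$ in distribution as $A\to\infty$. 3. If in addition $\liminf_{i\to\infty}F_i(X_i(0))>0$ and $\lim_{i\to\infty}\frac1iF_i(X_i(0)+1)=0$, then $\#\{i\in[A]:X_i^{(A)}(\infty)\ne X_i(0)\}\to\infty$ in distribution as $A\to\infty$, i.e. for every $K\in\mathbb{N}$ the probability that this number is at least $K$ tends to $1$.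
   Context: $\mathbb{N}=\{1,2,\dots\}$, $[A]=\{1,\dots,A\}$, $e^{(i)}$ the $i$-th unit vector. Let $\Xi_1,\Xi_2,\dots$ be independent pure birth processes: $\Xi_i$ has independent sojourn times $\tau_i(k)$, $k\ge X_i(0)$, exponential with rate $F_i(k)$, and $\Xi_i(t)=\min\{k:\sum_{l=X_i(0)}^k\tau_i(l)>t\}$ (min of empty set $=\infty$). For each $A\ge2$, with $\Xi^{(A)}=(\Xi_1,\dots,\Xi_A)$, $t_0=0$, $t_{n+1}=\inf\{t>t_n:\Xi^{(A)}(t)\ne\Xi^{(A)}(t_n)\}$, the $A$-agent generalized Pólya urn is $X^{(A)}(n)=\Xi^{(A)}(t_n)$, a Markov chain with $\mathbb{P}(X^{(A)}(n+1)-X^{(A)}(n)=e^{(i)}\mid X^{(A)}(n))=F_i(X^{(A)}_i(n))/\sum_{j=1}^AF_j(X^{(A)}_j(n))$. $X_i^{(A)}(\infty)=\lim_{n\to\infty}X_i^{(A)}(n)\in\mathbb{N}\cup\{\infty\}$. $\mathbb{P}$ is the law of the sequence of birth processes. *)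

theory Defs
  imports "HOL-Probability.Probability"
begin

text \<open>Sample space: the family of sojourn times tau(i,k) of agent i at level k.
  Agents are indexed by i >= 1, levels by k >= 1 (index 0 unused).
  tau(i,k) is exponential with rate F i k for k >= X0 i; the remaining
  coordinates are irrelevant and set to the point mass at 0.\<close>

definition sojourn_law :: "(nat \<Rightarrow> nat \<Rightarrow> real) \<Rightarrow> (nat \<Rightarrow> nat) \<Rightarrow> (nat \<times> nat \<Rightarrow> real) measure" where
  "sojourn_law F X0 = PiM UNIV (\<lambda>(i, k).
     if 1 \<le> i \<and> X0 i \<le> k then density lborel (exponential_density (F i k))
     else return borel 0)"

text \<open>Pure birth process started at x0 with sojourn times tau; time in [0,infinity],
  value in N \<union> {infinity}: Xi(t) = min {k. sum_{l=x0}^k tau l > t}.\<close>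

definition birth :: "nat \<Rightarrow> (nat \<Rightarrow> real) \<Rightarrow> ennreal \<Rightarrow> enat" where
  "birth x0 tau t =
     (if \<exists>k. t < ennreal (\<Sum>l=x0..k. tau l)
      then enat (LEAST k. t < ennreal (\<Sum>l=x0..k. tau l)) else \<infinity>)"

primrec jump_time :: "nat \<Rightarrow> (nat \<Rightarrow> nat) \<Rightarrow> (nat \<times> nat \<Rightarrow> real) \<Rightarrow> nat \<Rightarrow> ennreal" where
  "jump_time A X0 tau 0 = 0"
| "jump_time A X0 tau (Suc n) =
     Inf {t. jump_time A X0 tau n < t \<and>
             (\<exists>i\<in>{1..A}. birth (X0 i) (\<lambda>l. tau (i, l)) t
                          \<noteq> birth (X0 i) (\<lambda>l. tau (i, l)) (jump_time A X0 tau n))}"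

text \<open>The A-agent generalized Polya urn X^(A)(n)_i = Xi_i(t_n).\<close>

definition urn :: "nat \<Rightarrow> (nat \<Rightarrow> nat) \<Rightarrow> (nat \<times> nat \<Rightarrow> real) \<Rightarrow> nat \<Rightarrow> nat \<Rightarrow> enat" where
  "urn A X0 tau n i = birth (X0 i) (\<lambda>l. tau (i, l)) (jump_time A X0 tau n)"

definition urn_final :: "nat \<Rightarrow> (nat \<Rightarrow> nat) \<Rightarrow> (nat \<times> nat \<Rightarrow> real) \<Rightarrow> nat \<Rightarrow> enat" where
  "urn_final A X0 tau i = lim (\<lambda>n. urn A X0 tau n i)"

end

theory Submission
  imports Defs
begin

text \<open>
  Embed the urn in continuous time.  Agent \<open>i\<close> never leaves its initial level \<open>X\<^sub>i(0)\<close> exactly when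
  its first sojourn time outlasts the first explosion among the birth processes of agents
  \<open>1, \<dots>, A\<close> (up to ties), since all jumps of the urn happen before that explosion.

  For agents in \<open>B\<close>, summability of \<open>sup\<^sub>b 1/F\<^sub>b(k)\<close> makes the explosion time smaller than any
  \<open>\<epsilon> > 0\<close> with a probability bounded below uniformly in \<open>b\<close>; by independence, with probability
  tending to one some agent of \<open>B \<inter> [A]\<close> explodes before \<open>\<epsilon>\<close>.  Then only agents with first sojourn
  shorter than \<open>\<epsilon>\<close> can move: this gives (1), and, as a bounded rate \<open>F\<^sub>i(X\<^sub>i(0))\<close> makes such a
  sojourn have probability \<open>O(\<epsilon>)\<close>, also (2) by Markov's inequality.

  For (3), every agent whose first sojourn ends before the first explosion moves.  With
  \<open>s \<sim> 1/A\<close>, rates bounded below make at least \<open>K\<close> first sojourns shorter than \<open>s\<close> with high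
  probability.  If the first explosion happens before \<open>s\<close>, the exploding agent has a second
  sojourn shorter than \<open>s\<close>, so either it is preceded by \<open>K - 1\<close> agents with shorter first
  sojourns, all of which move, or it is one of at most \<open>K - 1\<close> agents of low rank whose second
  sojourn is shorter than \<open>s\<close>; the latter has probability at most \<open>(K - 1) s\<close> times the largest
  \<open>F\<^sub>j(X\<^sub>j(0) + 1)\<close>, \<open>j \<le> A\<close>, which is \<open>o(1)\<close>.
\<close>

section \<open>Birth processes and jump times\<close>

lemma birth_le_enat_iff:
  "birth x0 tau t \<le> enat m \<longleftrightarrow> (\<exists>j\<le>m. t < ennreal (\<Sum>l=x0..j. tau l))"
proof (cases "\<exists>k. t < ennreal (\<Sum>l=x0..k. tau l)")
  case True
  define k where "k = (LEAST k. t < ennreal (\<Sum>l=x0..k. tau l))"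
  have "birth x0 tau t = enat k"
    using True by (simp add: birth_def k_def)
  moreover have "t < ennreal (\<Sum>l=x0..k. tau l)"
    unfolding k_def by (rule LeastI_ex[OF True])
  moreover have "k \<le> j" if "t < ennreal (\<Sum>l=x0..j. tau l)" for j
    unfolding k_def using that by (rule Least_le)
  ultimately show ?thesis
    by (auto intro: order_trans)
next
  case False
  then show ?thesis by (simp add: birth_def)
qed

lemma birth_mono:
  assumes "t \<le> t'"
  shows "birth x0 tau t \<le> birth x0 tau t'"
proof (cases "birth x0 tau t'")
  case (enat m)
  then obtain j where "j \<le> m" "t' < ennreal (\<Sum>l=x0..j. tau l)"
    using birth_le_enat_iff[of x0 tau t' m] by auto
  with assms have "birth x0 tau t \<le> enat m"
    by (auto simp: birth_le_enat_iff intro: le_less_trans)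
  with enat show ?thesis by simp
qed simp

lemma birth_le_initial_iff: "birth x0 tau t \<le> enat x0 \<longleftrightarrow> t < ennreal (tau x0)"
proof -
  have "{x0..j} = {}" if "j \<le> x0" "j \<noteq> x0" for j
    using that by auto
  then have "(\<exists>j\<le>x0. t < ennreal (\<Sum>l=x0..j. tau l)) \<longleftrightarrow> t < ennreal (\<Sum>l=x0..x0. tau l)"
    by (metis order_refl sum.empty ennreal_0 not_less_zero)
  then show ?thesis
    unfolding birth_le_enat_iff by simp
qed

lemma initial_le_birth: "enat x0 \<le> birth x0 tau t"
proof (rule ccontr)
  assume "\<not> enat x0 \<le> birth x0 tau t"
  then obtain m where "birth x0 tau t = enat m" "m < x0"
    by (cases "birth x0 tau t") auto
  then obtain j where "j < x0" "t < ennreal (\<Sum>l=x0..j. tau l)"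
    using birth_le_enat_iff[of x0 tau t m] by auto
  then show False by simp
qed

lemma jump_time_le_Suc: "jump_time A X0 tau n \<le> jump_time A X0 tau (Suc n)"
  by (simp only: jump_time.simps) (rule Inf_greatest, auto)

lemma urn_final_eq_SUP: "urn_final A X0 tau i = (SUP n. urn A X0 tau n i)"
proof -
  have "incseq (\<lambda>n. urn A X0 tau n i)"
    unfolding urn_def by (rule incseq_SucI) (intro birth_mono jump_time_le_Suc)
  then show ?thesis
    unfolding urn_final_def by (intro limI LIMSEQ_SUP)
qed

lemma urn_final_eq_initial_iff:
  "urn_final A X0 tau i = enat (X0 i) \<longleftrightarrow> (\<forall>n. jump_time A X0 tau n < ennreal (tau (i, X0 i)))"
proof -
  have "enat (X0 i) \<le> (SUP n. urn A X0 tau n i)"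
    unfolding urn_def by (rule SUP_upper2[where i=0]) (simp_all add: initial_le_birth)
  then have "urn_final A X0 tau i = enat (X0 i) \<longleftrightarrow> (SUP n. urn A X0 tau n i) \<le> enat (X0 i)"
    unfolding urn_final_eq_SUP by auto
  also have "\<dots> \<longleftrightarrow> (\<forall>n. urn A X0 tau n i \<le> enat (X0 i))"
    by (simp add: SUP_le_iff)
  finally show ?thesis
    unfolding urn_def birth_le_initial_iff .
qed

lemma enat_neq_iff_le_enat: "(x::enat) \<noteq> y \<longleftrightarrow> (\<exists>m. (x \<le> enat m) \<noteq> (y \<le> enat m))"
proof
  assume "x \<noteq> y"
  then consider "x < y" | "y < x"
    by (meson linorder_neqE)
  then show "\<exists>m. (x \<le> enat m) \<noteq> (y \<le> enat m)"
  proof cases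
    case 1
    then obtain m where "x = enat m" by (cases x) auto
    with 1 show ?thesis by (intro exI[of _ m]) auto
  next
    case 2
    then obtain m where "y = enat m" by (cases y) auto
    with 2 show ?thesis by (intro exI[of _ m]) auto
  qed
qed auto

lemma jump_time_Suc_less_iff:
  "jump_time A X0 tau (Suc n) < c \<longleftrightarrow>
   (\<exists>r::rat. ennreal (real_of_rat r) < c \<and> jump_time A X0 tau n < ennreal (real_of_rat r) \<and>
     (\<exists>i\<in>{1..A}. birth (X0 i) (\<lambda>l. tau (i, l)) (ennreal (real_of_rat r))
                \<noteq> birth (X0 i) (\<lambda>l. tau (i, l)) (jump_time A X0 tau n)))"
  (is "?L \<longleftrightarrow> ?R")
proof
  let ?t = "jump_time A X0 tau n" and ?b = "\<lambda>i. birth (X0 i) (\<lambda>l. tau (i, l))"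
  assume ?L
  then obtain t i where t: "?t < t" "t < c" and i: "i \<in> {1..A}" "?b i t \<noteq> ?b i ?t"
    by (auto simp: Inf_less_iff)
  obtain r :: rat where r: "t < ennreal (real_of_rat r)" "ennreal (real_of_rat r) < c"
    using ennreal_rat_dense[OF t(2)] by blast
  have "?b i ?t \<le> ?b i t" "?b i t \<le> ?b i (ennreal (real_of_rat r))"
    using t(1) r(1) by (auto intro!: birth_mono)
  with i(2) have "?b i (ennreal (real_of_rat r)) \<noteq> ?b i ?t"
    by auto
  with r t i(1) show ?R
    by (intro exI[of _ r]) auto
next
  assume ?R
  then obtain r :: rat where "ennreal (real_of_rat r) < c" and
    "jump_time A X0 tau (Suc n) \<le> ennreal (real_of_rat r)"
    by (auto simp only: jump_time.simps intro: Inf_lower)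
  then show ?L by simp
qed

lemma borel_measurable_jump_time:
  assumes coord: "\<And>i l. (\<lambda>\<omega>. \<omega> (i, l)) \<in> borel_measurable M"
  shows "(\<lambda>\<omega>. jump_time A X0 \<omega> n) \<in> borel_measurable M"
proof (induction n)
  case (Suc n)
  note [measurable] = coord Suc.IH
  have ex_atMost: "(\<exists>j\<le>m. P j) \<longleftrightarrow> (\<exists>j\<in>{..m}. P j)" for m :: nat and P
    by auto
  show ?case
  proof (rule borel_measurableI_less)
    fix c :: ennreal
    have "{\<omega> \<in> space M. jump_time A X0 \<omega> (Suc n) < c} =
      {\<omega> \<in> space M. \<exists>r::rat. ennreal (real_of_rat r) < c \<and> jump_time A X0 \<omega> n < ennreal (real_of_rat r) \<and>
        (\<exists>i\<in>{1..A}. \<exists>m. (\<exists>j\<in>{..m}. ennreal (real_of_rat r) < ennreal (\<Sum>l=X0 i..j. \<omega> (i, l)))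
               \<noteq> (\<exists>j\<in>{..m}. jump_time A X0 \<omega> n < ennreal (\<Sum>l=X0 i..j. \<omega> (i, l))))}"
      unfolding jump_time_Suc_less_iff enat_neq_iff_le_enat birth_le_enat_iff by (simp only: ex_atMost)
    also have "\<dots> \<in> sets M"
      by measurable
    finally show "{\<omega> \<in> space M. jump_time A X0 \<omega> (Suc n) < c} \<in> sets M" .
  qed
qed simp

section \<open>Explosion times\<close>

definition explosion_time :: "nat \<Rightarrow> (nat \<Rightarrow> real) \<Rightarrow> ennreal" where
  "explosion_time x0 tau = (SUP k. ennreal (\<Sum>l=x0..k. tau l))"

lemma borel_measurable_explosion_time [measurable]:
  assumes [measurable]: "\<And>l. (\<lambda>\<omega>. g \<omega> l) \<in> borel_measurable N"
  shows "(\<lambda>\<omega>. explosion_time x0 (g \<omega>)) \<in> borel_measurable N"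
  unfolding explosion_time_def by measurable

lemma psum_le_explosion_time: "ennreal (\<Sum>l=x0..k. tau l) \<le> explosion_time x0 tau"
  unfolding explosion_time_def by (rule SUP_upper) simp

lemma explosion_time_le_split:
  assumes nonneg: "\<forall>k\<ge>x0. 0 \<le> tau k"
  shows "explosion_time x0 tau \<le> ennreal (\<Sum>l\<in>{x0..<x0+n}. tau l) + (\<Sum>i. ennreal (tau (x0 + n + i)))"
  unfolding explosion_time_def
proof (rule SUP_least)
  fix k
  have "(\<Sum>l=x0..k. tau l) \<le> (\<Sum>l\<in>{x0..<x0+n} \<union> {x0+n..k}. tau l)"
    using nonneg by (intro sum_mono2) auto
  also have "\<dots> = (\<Sum>l\<in>{x0..<x0+n}. tau l) + (\<Sum>l\<in>{x0+n..k}. tau l)"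
    by (intro sum.union_disjoint) auto
  finally have "ennreal (\<Sum>l=x0..k. tau l)
      \<le> ennreal (\<Sum>l\<in>{x0..<x0+n}. tau l) + ennreal (\<Sum>l\<in>{x0+n..k}. tau l)"
    using nonneg by (subst ennreal_plus[symmetric]) (auto intro: ennreal_leI sum_nonneg)
  also have "ennreal (\<Sum>l\<in>{x0+n..k}. tau l) = (\<Sum>l\<in>{x0+n..k}. ennreal (tau l))"
    using nonneg by (intro sum_ennreal[symmetric]) auto
  also have "\<dots> = (\<Sum>i<Suc k - (x0 + n). ennreal (tau (x0 + n + i)))"
  proof (rule sum.reindex_bij_witness[of _ "\<lambda>i. x0 + n + i" "\<lambda>l. l - (x0 + n)"])
  qed auto
  also have "\<dots> \<le> (\<Sum>i. ennreal (tau (x0 + n + i)))"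
    by (rule sum_le_suminf) auto
  finally show "ennreal (\<Sum>l=x0..k. tau l)
      \<le> ennreal (\<Sum>l\<in>{x0..<x0+n}. tau l) + (\<Sum>i. ennreal (tau (x0 + n + i)))"
    by (simp add: add_left_mono)
qed

lemma explosion_time_less_if_short:
  assumes nonneg: "\<forall>k\<ge>x0. 0 \<le> tau k" and e: "0 < e"
    and front: "\<forall>l\<in>{x0..<x0+n}. tau l \<le> a" "real n * a \<le> e / 2"
    and tail: "(\<Sum>i. ennreal (tau (x0 + n + i))) < ennreal (e / 2)"
  shows "explosion_time x0 tau < ennreal e"
proof -
  have "(\<Sum>l\<in>{x0..<x0+n}. tau l) \<le> real n * a"
    using sum_bounded_above[of "{x0..<x0+n}" tau a] front(1) by simp
  then have "ennreal (\<Sum>l\<in>{x0..<x0+n}. tau l) \<le> ennreal (e / 2)"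
    using front(2) by (intro ennreal_leI) simp
  then have "explosion_time x0 tau \<le> ennreal (e / 2) + (\<Sum>i. ennreal (tau (x0 + n + i)))"
    using explosion_time_le_split[OF nonneg, of n] by (meson add_right_mono order_trans)
  also have "\<dots> < ennreal (e / 2) + ennreal (e / 2)"
    using tail by (subst ennreal_add_left_cancel_less) auto
  also have "\<dots> = ennreal e"
    using e by (simp flip: ennreal_plus)
  finally show ?thesis .
qed

lemma birth_finite_before_explosion:
  assumes "t < explosion_time x0 tau"
  shows "\<exists>m. birth x0 tau t = enat m"
proof -
  obtain k where "t < ennreal (\<Sum>l=x0..k. tau l)"
    using assms unfolding explosion_time_def by (auto simp: less_SUP_iff)
  then have "birth x0 tau t \<le> enat k"
    by (auto simp: birth_le_enat_iff)
  then show ?thesis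
    by (cases "birth x0 tau t") auto
qed

lemma birth_eq_enatD:
  assumes pos: "\<forall>k\<ge>x0. 0 < tau k" and b: "birth x0 tau t = enat m"
  shows "t < ennreal (\<Sum>l=x0..m. tau l)"
    and "t \<le> t' \<Longrightarrow> t' < ennreal (\<Sum>l=x0..m. tau l) \<Longrightarrow> birth x0 tau t' = enat m"
    and "ennreal (\<Sum>l=x0..m. tau l) \<le> t' \<Longrightarrow> birth x0 tau t' \<noteq> enat m"
proof -
  have psum_mono: "(\<Sum>l=x0..j. tau l) \<le> (\<Sum>l=x0..m. tau l)" if "j \<le> m" for j
    by (rule sum_mono2) (use pos that in \<open>auto intro: less_imp_le\<close>)
  obtain j where "j \<le> m" "t < ennreal (\<Sum>l=x0..j. tau l)"
    using b birth_le_enat_iff[of x0 tau t m] by auto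
  then show "t < ennreal (\<Sum>l=x0..m. tau l)"
    using psum_mono by (meson ennreal_leI less_le_trans)
  show "birth x0 tau t' = enat m" if "t \<le> t'" "t' < ennreal (\<Sum>l=x0..m. tau l)"
  proof -
    have "birth x0 tau t' \<le> enat m"
      using that(2) by (auto simp: birth_le_enat_iff)
    moreover have "enat m \<le> birth x0 tau t'"
      using b birth_mono[OF that(1), of x0 tau] by simp
    ultimately show ?thesis by simp
  qed
  show "birth x0 tau t' \<noteq> enat m" if "ennreal (\<Sum>l=x0..m. tau l) \<le> t'"
  proof
    assume "birth x0 tau t' = enat m"
    then obtain j where "j \<le> m" "t' < ennreal (\<Sum>l=x0..j. tau l)"
      using birth_le_enat_iff[of x0 tau t' m] by auto
    then show False
      using that psum_mono by (meson ennreal_leI leD order_trans)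
  qed
qed

lemma psum_less_explosion_time:
  assumes pos: "\<forall>k\<ge>x0. 0 < tau k" and b: "birth x0 tau t = enat m"
  shows "ennreal (\<Sum>l=x0..m. tau l) < explosion_time x0 tau"
proof -
  have m: "x0 \<le> m"
    using initial_le_birth[of x0 tau t] b by simp
  have "0 \<le> (\<Sum>l=x0..m. tau l)"
    using pos by (intro sum_nonneg) (auto intro: less_imp_le)
  moreover have "(\<Sum>l=x0..Suc m. tau l) = (\<Sum>l=x0..m. tau l) + tau (Suc m)"
    using m by (simp add: sum.cl_ivl_Suc)
  moreover have "0 < tau (Suc m)"
    using pos m by auto
  ultimately have "ennreal (\<Sum>l=x0..m. tau l) < ennreal (\<Sum>l=x0..Suc m. tau l)"
    by (subst ennreal_less_iff) auto
  also have "\<dots> \<le> explosion_time x0 tau"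
    by (rule psum_le_explosion_time)
  finally show ?thesis .
qed

lemma jump_time_less_explosion_time:
  assumes pos: "\<forall>k\<ge>X0 b. 0 < tau (b, k)" and b: "b \<in> {1..A}"
  shows "jump_time A X0 tau n < explosion_time (X0 b) (\<lambda>l. tau (b, l))"
proof (induction n)
  case 0
  have "0 < ennreal (\<Sum>l=X0 b..X0 b. tau (b, l))"
    using pos by simp
  also have "\<dots> \<le> explosion_time (X0 b) (\<lambda>l. tau (b, l))"
    by (rule psum_le_explosion_time)
  finally show ?case by simp
next
  case (Suc n)
  let ?b = "birth (X0 b) (\<lambda>l. tau (b, l))" and ?t = "jump_time A X0 tau n"
  obtain m where m: "?b ?t = enat m"
    using birth_finite_before_explosion[OF Suc.IH] by blast
  let ?s = "ennreal (\<Sum>l=X0 b..m. tau (b, l))"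
  have "?t < ?s" and "?b ?s \<noteq> ?b ?t"
    using birth_eq_enatD[of "X0 b" "\<lambda>l. tau (b, l)", OF _ m] pos m by auto
  with b have "jump_time A X0 tau (Suc n) \<le> ?s"
    by (simp only: jump_time.simps) (rule Inf_lower, blast)
  also have "\<dots> < explosion_time (X0 b) (\<lambda>l. tau (b, l))"
    by (rule psum_less_explosion_time[OF _ m]) (use pos in simp)
  finally show ?case .
qed

lemma urn_final_eq_initial_if_explosion_le:
  assumes pos: "\<forall>k\<ge>X0 b. 0 < tau (b, k)" and b: "b \<in> {1..A}"
    and le: "explosion_time (X0 b) (\<lambda>l. tau (b, l)) \<le> ennreal (tau (i, X0 i))"
  shows "urn_final A X0 tau i = enat (X0 i)"
  unfolding urn_final_eq_initial_iff
  using jump_time_less_explosion_time[of X0 b tau A] pos b le by (blast intro: less_le_trans)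

text \<open>Before any explosion, the next jump time is the earliest next jump of the individual birth
  processes, so some agent changes its level there.\<close>

lemma jump_time_Suc_changes_level:
  assumes A: "1 \<le> A" and pos: "\<forall>j\<in>{1..A}. \<forall>k\<ge>X0 j. 0 < tau (j, k)"
    and before: "\<forall>j\<in>{1..A}. jump_time A X0 tau n < explosion_time (X0 j) (\<lambda>l. tau (j, l))"
  shows "\<exists>j\<in>{1..A}. birth (X0 j) (\<lambda>l. tau (j, l)) (jump_time A X0 tau (Suc n))
                   \<noteq> birth (X0 j) (\<lambda>l. tau (j, l)) (jump_time A X0 tau n)"
proof -
  define t where "t = jump_time A X0 tau n"
  define bj where "bj j = birth (X0 j) (\<lambda>l. tau (j, l))" for j
  define m where "m j = the_enat (bj j t)" for j
  have bm: "bj j t = enat (m j)" if "j \<in> {1..A}" for j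
    using birth_finite_before_explosion[OF before[rule_format, OF that]] by (auto simp: m_def bj_def t_def)
  have posj: "\<forall>k\<ge>X0 j. 0 < tau (j, k)" if "j \<in> {1..A}" for j
    using pos that by auto
  note jump = birth_eq_enatD[OF posj bm[unfolded bj_def]]
  define c where "c j = ennreal (\<Sum>l=X0 j..m j. tau (j, l))" for j
  define u where "u = Min (c ` {1..A})"
  have fin: "finite (c ` {1..A})" "c ` {1..A} \<noteq> {}"
    using A by auto
  obtain js where js: "js \<in> {1..A}" "c js = u"
    using Min_in[OF fin] unfolding u_def by auto
  have "t < c j" if "j \<in> {1..A}" for j
    using jump(1) that unfolding c_def by blast
  then have tu: "t < u"
    unfolding u_def using fin by (simp add: Min_gr_iff)
  have ujs: "bj js u \<noteq> bj js t"
    using jump(3)[OF js(1), of u] js bm[OF js(1)] by (simp add: c_def bj_def t_def)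
  let ?X = "{t'. t < t' \<and> (\<exists>i\<in>{1..A}. bj i t' \<noteq> bj i t)}"
  have "jump_time A X0 tau (Suc n) = Inf ?X"
    by (simp add: t_def bj_def)
  also have "Inf ?X = u"
  proof (rule antisym)
    show "Inf ?X \<le> u"
      using tu ujs js by (intro Inf_lower) auto
    show "u \<le> Inf ?X"
    proof (rule Inf_greatest)
      fix t' assume "t' \<in> ?X"
      then obtain j where j: "j \<in> {1..A}" "t < t'" "bj j t' \<noteq> bj j t"
        by auto
      have "c j \<le> t'"
      proof (rule ccontr)
        assume "\<not> c j \<le> t'"
        then have "bj j t' = bj j t"
          using jump(2)[of j t'] j bm[OF j(1)] by (simp add: c_def bj_def t_def less_imp_le)
        with j(3) show False ..
      qed
      moreover have "u \<le> c j"
        unfolding u_def using fin j(1) by simp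
      ultimately show "u \<le> t'" by simp
    qed
  qed
  finally show ?thesis
    using js ujs by (auto simp: bj_def t_def)
qed

text \<open>If agent \<open>i\<close> never left its initial level, infinitely many jumps would happen before its
  first sojourn time ends; but each jump raises the total level of the \<open>A\<close> agents, which stays
  bounded by the (finite) total level at that time.\<close>

lemma urn_final_neq_initial_if_less_explosion_times:
  assumes i: "i \<in> {1..A}" and pos: "\<forall>j\<in>{1..A}. \<forall>k\<ge>X0 j. 0 < tau (j, k)"
    and less: "\<forall>j\<in>{1..A}. ennreal (tau (i, X0 i)) < explosion_time (X0 j) (\<lambda>l. tau (j, l))"
  shows "urn_final A X0 tau i \<noteq> enat (X0 i)"
proof
  assume "urn_final A X0 tau i = enat (X0 i)"
  then have stay: "\<forall>n. jump_time A X0 tau n < ennreal (tau (i, X0 i))"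
    by (simp add: urn_final_eq_initial_iff)
  define s where "s = ennreal (tau (i, X0 i))"
  define jt where "jt = jump_time A X0 tau"
  define lvl where "lvl j t = the_enat (birth (X0 j) (\<lambda>l. tau (j, l)) t)" for j t
  define total where "total t = (\<Sum>j\<in>{1..A}. lvl j t)" for t
  have before: "\<forall>j\<in>{1..A}. jt n < explosion_time (X0 j) (\<lambda>l. tau (j, l))" for n
    using stay less by (auto simp: jt_def intro: less_trans)
  have lvl: "birth (X0 j) (\<lambda>l. tau (j, l)) t = enat (lvl j t)"
    if "j \<in> {1..A}" "t < explosion_time (X0 j) (\<lambda>l. tau (j, l))" for j t
    using birth_finite_before_explosion[OF that(2)] by (auto simp: lvl_def)
  have lvl_mono: "lvl j t \<le> lvl j t'"
    if "j \<in> {1..A}" "t \<le> t'" "t' < explosion_time (X0 j) (\<lambda>l. tau (j, l))" for j t t'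
    using birth_mono[OF that(2), of "X0 j" "\<lambda>l. tau (j, l)"] lvl[OF that(1,3)]
      lvl[OF that(1) le_less_trans[OF that(2,3)]] by simp
  have step: "total (jt n) < total (jt (Suc n))" for n
  proof -
    obtain j where j: "j \<in> {1..A}"
      "birth (X0 j) (\<lambda>l. tau (j, l)) (jt (Suc n)) \<noteq> birth (X0 j) (\<lambda>l. tau (j, l)) (jt n)"
      using jump_time_Suc_changes_level[of A X0 tau n] i pos before[of n] unfolding jt_def by auto
    then have "lvl j (jt (Suc n)) \<noteq> lvl j (jt n)"
      using lvl[OF j(1) before[rule_format, OF j(1)]] by metis
    have mono: "lvl j' (jt n) \<le> lvl j' (jt (Suc n))" if "j' \<in> {1..A}" for j'
      using lvl_mono[OF that _ before[rule_format, OF that]] jump_time_le_Suc unfolding jt_def by blast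
    with \<open>lvl j (jt (Suc n)) \<noteq> lvl j (jt n)\<close> have "lvl j (jt n) < lvl j (jt (Suc n))"
      using j(1) by (simp add: le_neq_trans)
    then show ?thesis
      unfolding total_def using mono j(1) by (intro sum_strict_mono_ex1) auto
  qed
  have grow: "n \<le> total (jt n)" for n
  proof (induction n)
    case (Suc n)
    with step[of n] show ?case by simp
  qed simp
  have bounded: "total (jt n) \<le> total s" for n
    unfolding total_def
  proof (rule sum_mono)
    fix j assume j: "j \<in> {1..A}"
    show "lvl j (jt n) \<le> lvl j s"
      using lvl_mono[OF j _ less[rule_format, OF j]] stay by (simp add: jt_def s_def less_imp_le)
  qed
  show False
    using grow[of "Suc (total s)"] bounded[of "Suc (total s)"] by simp
qed

lemma card_first_sojourn_le_card_moved:
  fixes \<omega> :: "nat \<times> nat \<Rightarrow> real"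
  assumes pos: "\<forall>j\<in>{1..A}. \<forall>k\<ge>X0 j. 0 < \<omega> (j, k)"
    and t: "\<forall>j\<in>{1..A}. ennreal t < explosion_time (X0 j) (\<lambda>l. \<omega> (j, l))"
  shows "card {i\<in>{1..A}. \<omega> (i, X0 i) \<le> t} \<le> card {i\<in>{1..A}. urn_final A X0 \<omega> i \<noteq> enat (X0 i)}"
proof (rule card_mono)
  show "{i\<in>{1..A}. \<omega> (i, X0 i) \<le> t} \<subseteq> {i\<in>{1..A}. urn_final A X0 \<omega> i \<noteq> enat (X0 i)}"
  proof safe
    fix i assume i: "i \<in> {1..A}" "\<omega> (i, X0 i) \<le> t"
    have "\<forall>j\<in>{1..A}. ennreal (\<omega> (i, X0 i)) < explosion_time (X0 j) (\<lambda>l. \<omega> (j, l))"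
      using t ennreal_leI[OF i(2)] by (auto intro: le_less_trans)
    then show "urn_final A X0 \<omega> i = enat (X0 i) \<Longrightarrow> False"
      using urn_final_neq_initial_if_less_explosion_times[OF i(1) pos] by blast
  qed
qed simp

lemma card_low_rank_le:
  fixes \<sigma> :: "'a \<Rightarrow> real"
  assumes "finite I"
  shows "card {j\<in>I. card {i\<in>I - {j}. \<sigma> i \<le> \<sigma> j} < K - 1} \<le> K - 1"
proof (cases "{j\<in>I. card {i\<in>I - {j}. \<sigma> i \<le> \<sigma> j} < K - 1} = {}")
  case False
  define J where "J = {j\<in>I. card {i\<in>I - {j}. \<sigma> i \<le> \<sigma> j} < K - 1}"
  have J: "finite J" "\<sigma> ` J \<noteq> {}"
    using assms False by (simp_all add: J_def)
  obtain jm where jm: "jm \<in> J" "\<sigma> jm = Max (\<sigma> ` J)"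
    using Max_in[OF finite_imageI[OF J(1)] J(2)] by auto
  have "J - {jm} \<subseteq> {i\<in>I - {jm}. \<sigma> i \<le> \<sigma> jm}"
    using J jm by (auto simp: J_def)
  then have "card (J - {jm}) \<le> card {i\<in>I - {jm}. \<sigma> i \<le> \<sigma> jm}"
    using assms by (intro card_mono) auto
  moreover have "card {i\<in>I - {jm}. \<sigma> i \<le> \<sigma> jm} < K - 1"
    using jm(1) by (simp add: J_def)
  moreover have "card J = card (J - {jm}) + 1"
    using card_Suc_Diff1[OF J(1) jm(1)] by simp
  ultimately show ?thesis
    unfolding J_def[symmetric] by simp
next
  case True
  show ?thesis
    unfolding True by simp
qed

text \<open>All agents whose first sojourn ends before the earliest explosion move. If that explosion
  happens after \<open>s\<close>, these include the \<open>K\<close> agents with first sojourn at most \<open>s\<close>; otherwise the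
  exploding agent \<open>j\<close> has both its first two sojourns shorter than \<open>s\<close>, and so do all agents whose
  first sojourn is not longer than that of \<open>j\<close>.\<close>

lemma card_moved_ge:
  fixes \<omega> :: "nat \<times> nat \<Rightarrow> real"
  assumes pos: "\<forall>j\<in>{1..A}. \<forall>k\<ge>X0 j. 0 < \<omega> (j, k)" and K: "1 \<le> K" and s: "0 < s"
    and many_short: "K \<le> card {i\<in>{1..A}. \<omega> (i, X0 i) \<le> s}"
    and no_fast_low_rank: "\<forall>j\<in>{1..A}.
      \<not> (card {i\<in>{1..A} - {j}. \<omega> (i, X0 i) \<le> \<omega> (j, X0 j)} < K - 1 \<and> \<omega> (j, Suc (X0 j)) < s)"
  shows "K \<le> card {i\<in>{1..A}. urn_final A X0 \<omega> i \<noteq> enat (X0 i)}"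
proof -
  define E where "E j = explosion_time (X0 j) (\<lambda>l. \<omega> (j, l))" for j
  have "1 \<le> A"
    using many_short K by (cases A) auto
  then have fin: "finite (E ` {1..A})" "E ` {1..A} \<noteq> {}"
    by auto
  obtain js where js: "js \<in> {1..A}" "E js = Min (E ` {1..A})"
    using Min_in[OF fin] by auto
  have below_all: "\<forall>j\<in>{1..A}. ennreal t < E j" if "ennreal t < E js" for t
    using that js(2) fin by (auto intro: less_le_trans)
  show ?thesis
  proof (cases "ennreal s < E js")
    case True
    with many_short show ?thesis
      using card_first_sojourn_le_card_moved[OF pos below_all[OF True, unfolded E_def]] by simp
  next
    case False
    let ?first = "\<omega> (js, X0 js)" and ?second = "\<omega> (js, Suc (X0 js))"
    have pos_js: "0 < ?first" "0 < ?second"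
      using pos js(1) by auto
    have "ennreal (\<Sum>l=X0 js..Suc (X0 js). \<omega> (js, l)) \<le> E js"
      unfolding E_def by (rule psum_le_explosion_time)
    then have first_second: "ennreal (?first + ?second) \<le> E js"
      by simp
    also have "\<dots> \<le> ennreal s"
      using False by simp
    finally have "?first + ?second \<le> s"
      using s by simp
    with pos_js have "?second < s"
      by linarith
    then have "\<not> card {i\<in>{1..A} - {js}. \<omega> (i, X0 i) \<le> ?first} < K - 1"
      using no_fast_low_rank js(1) by blast
    then have "K \<le> card {i\<in>{1..A} - {js}. \<omega> (i, X0 i) \<le> ?first} + 1"
      by linarith
    also have "\<dots> = card {i\<in>{1..A}. \<omega> (i, X0 i) \<le> ?first}"
    proof -
      have "{i\<in>{1..A}. \<omega> (i, X0 i) \<le> ?first} = insert js {i\<in>{1..A} - {js}. \<omega> (i, X0 i) \<le> ?first}"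
        using js(1) by auto
      then show ?thesis
        by simp
    qed
    also have "\<dots> \<le> card {i\<in>{1..A}. urn_final A X0 \<omega> i \<noteq> enat (X0 i)}"
    proof (rule card_first_sojourn_le_card_moved[OF pos, unfolded E_def[symmetric]], rule below_all)
      have "ennreal ?first < ennreal (?first + ?second)"
        using pos_js by (simp add: ennreal_less_iff)
      with first_second show "ennreal ?first < E js"
        by simp
    qed
    finally show ?thesis .
  qed
qed

section \<open>Counting, Markov bounds and limits\<close>

lemma borel_measurable_pred_le [measurable (raw)]:
  fixes f :: "'a \<Rightarrow> 'b::{second_countable_topology, linorder_topology}"
  shows "f \<in> borel_measurable M \<Longrightarrow> g \<in> borel_measurable M \<Longrightarrow> Measurable.pred M (\<lambda>w. f w \<le> g w)"
  unfolding Measurable.pred_def by (rule borel_measurable_le)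

lemma measurable_card_Collect [measurable (raw)]:
  assumes "finite I" and "\<And>i. i \<in> I \<Longrightarrow> Measurable.pred N (P i)"
  shows "(\<lambda>\<omega>. card {i\<in>I. P i \<omega>}) \<in> measurable N (count_space UNIV)"
proof -
  have "card {i\<in>I. P i \<omega>} = (\<Sum>i\<in>I. if P i \<omega> then 1 else 0)" for \<omega>
    using assms(1) by (simp add: sum.If_cases Int_def conj_commute)
  moreover have "(\<lambda>\<omega>. \<Sum>i\<in>I. if P i \<omega> then 1 else 0 :: nat) \<in> measurable N (count_space UNIV)"
    using assms(2) by (intro measurable_sum_nat measurable_If) (auto simp: pred_def)
  ultimately show ?thesis
    by simp
qed

lemma card_ge_if_disjoint_blocks_hit:
  assumes "finite S" and sub: "\<And>r. r < K \<Longrightarrow> block r \<subseteq> S"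
    and disj: "\<And>r r' i. i \<in> block r \<Longrightarrow> i \<in> block r' \<Longrightarrow> r = r'"
    and hit: "\<And>r. r < K \<Longrightarrow> \<exists>i\<in>block r. P i"
  shows "K \<le> card {i\<in>S. P i}"
proof -
  obtain g where g: "\<And>r. r < K \<Longrightarrow> g r \<in> block r \<and> P (g r)"
    using hit by metis
  have "inj_on g {..<K}"
    using g disj by (intro inj_onI) (metis lessThan_iff)
  moreover have "g ` {..<K} \<subseteq> {i\<in>S. P i}"
    using g sub by blast
  ultimately show ?thesis
    using card_mono[OF _ \<open>g ` {..<K} \<subseteq> {i\<in>S. P i}\<close>] assms(1) by (simp add: card_image)
qed

lemma (in prob_space) expectation_card:
  assumes "finite I" and S: "\<And>i. i \<in> I \<Longrightarrow> S i \<in> events"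
  shows "integrable M (\<lambda>\<omega>. real (card {i\<in>I. \<omega> \<in> S i}))"
    and "expectation (\<lambda>\<omega>. real (card {i\<in>I. \<omega> \<in> S i})) = (\<Sum>i\<in>I. prob (S i))"
proof -
  have card_eq: "real (card {i\<in>I. \<omega> \<in> S i}) = (\<Sum>i\<in>I. indicator (S i) \<omega>)" for \<omega>
    using assms(1) by (simp add: indicator_def sum.If_cases Int_def conj_commute)
  have "integrable M (indicator (S i) :: _ \<Rightarrow> real)" if "i \<in> I" for i
    using S[OF that] by (intro integrable_real_indicator) (auto simp: emeasure_eq_measure)
  then show "integrable M (\<lambda>\<omega>. real (card {i\<in>I. \<omega> \<in> S i}))"
    unfolding card_eq by (intro Bochner_Integration.integrable_sum)
  show "expectation (\<lambda>\<omega>. real (card {i\<in>I. \<omega> \<in> S i})) = (\<Sum>i\<in>I. prob (S i))"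
    unfolding card_eq using S
    by (subst Bochner_Integration.integral_sum) (auto intro!: integrable_real_indicator simp: emeasure_eq_measure)
qed

lemma (in prob_space) prob_card_ge_le:
  assumes "finite I" and S: "\<And>i. i \<in> I \<Longrightarrow> S i \<in> events" and c: "0 < c"
  shows "prob {\<omega> \<in> space M. c \<le> real (card {i\<in>I. \<omega> \<in> S i})} \<le> (\<Sum>i\<in>I. prob (S i)) / c"
  using integral_Markov_inequality_measure[OF expectation_card(1)[OF assms(1,2)] sets.top _ c]
  by (simp add: expectation_card(2)[OF assms(1,2)])

lemma (in prob_space) sum_prob_le_if_card_le:
  assumes "finite I" and S: "\<And>i. i \<in> I \<Longrightarrow> S i \<in> events"
    and bound: "\<And>\<omega>. \<omega> \<in> space M \<Longrightarrow> real (card {i\<in>I. \<omega> \<in> S i}) \<le> c"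
  shows "(\<Sum>i\<in>I. prob (S i)) \<le> c"
proof -
  have "(\<Sum>i\<in>I. prob (S i)) = expectation (\<lambda>\<omega>. real (card {i\<in>I. \<omega> \<in> S i}))"
    using expectation_card[OF assms(1,2)] by simp
  also have "\<dots> \<le> expectation (\<lambda>_. c)"
    by (rule integral_mono[OF expectation_card(1)[OF assms(1,2)]]) (auto simp: bound)
  finally show ?thesis
    by (simp add: prob_space)
qed

lemma (in prob_space) prob_less_ge_half:
  assumes [measurable]: "u \<in> borel_measurable M" and e: "0 < e"
    and int: "(\<integral>\<^sup>+x. u x \<partial>M) \<le> ennreal (e / 2)"
  shows "1 / 2 \<le> prob {x \<in> space M. u x < ennreal e}"
proof -
  define c where "c = ennreal (1 / e)"
  have "{x \<in> space M. \<not> u x < ennreal e} \<subseteq> {x \<in> space M. 1 \<le> c * u x}"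
  proof safe
    fix x assume "\<not> u x < ennreal e"
    then have "c * ennreal e \<le> c * u x"
      by (intro mult_left_mono) auto
    then show "1 \<le> c * u x"
      using e by (simp add: c_def ennreal_mult[symmetric])
  qed
  then have "emeasure M {x \<in> space M. \<not> u x < ennreal e} \<le> emeasure M {x \<in> space M. 1 \<le> c * u x}"
    by (intro emeasure_mono) measurable
  also have "\<dots> \<le> c * (\<integral>\<^sup>+x. u x * indicator (space M) x \<partial>M)"
    by (rule nn_integral_Markov_inequality) auto
  also have "(\<integral>\<^sup>+x. u x * indicator (space M) x \<partial>M) = (\<integral>\<^sup>+x. u x \<partial>M)"
    by (intro nn_integral_cong) auto
  also have "c * (\<integral>\<^sup>+x. u x \<partial>M) \<le> c * ennreal (e / 2)"
    using int by (intro mult_left_mono) auto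
  also have "\<dots> = ennreal (1 / 2)"
    using e by (simp add: c_def ennreal_mult[symmetric])
  finally have "ennreal (prob {x \<in> space M. \<not> u x < ennreal e}) \<le> ennreal (1 / 2)"
    by (simp only: emeasure_eq_measure)
  then have "prob {x \<in> space M. \<not> u x < ennreal e} \<le> 1 / 2"
    by (rule ennreal_le_iff[THEN iffD1, rotated]) simp
  moreover have "prob {x \<in> space M. \<not> u x < ennreal e} = 1 - prob {x \<in> space M. u x < ennreal e}"
    by (subst prob_compl[symmetric]) (auto intro: arg_cong[where f=prob])
  ultimately show ?thesis
    by simp
qed

lemma (in prob_space) weak_conv_m_return:
  assumes [measurable]: "\<And>n. X n \<in> borel_measurable M" and le: "\<And>n \<omega>. X n \<omega> \<le> c"
    and small: "\<And>x. x < c \<Longrightarrow> (\<lambda>n. prob {\<omega> \<in> space M. X n \<omega> \<le> x}) \<longlonglongrightarrow> 0"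
  shows "weak_conv_m (\<lambda>n. distr M borel (X n)) (return borel c)"
  unfolding weak_conv_m_def weak_conv_def
proof (intro allI impI)
  fix x
  have cdf_X: "cdf (distr M borel (X n)) x = prob {\<omega> \<in> space M. X n \<omega> \<le> x}" for n
    unfolding cdf_def by (subst measure_distr) (auto intro: arg_cong[where f=prob])
  show "(\<lambda>n. cdf (distr M borel (X n)) x) \<longlonglongrightarrow> cdf (return borel c) x"
  proof (cases "c \<le> x")
    case True
    then have "{\<omega> \<in> space M. X n \<omega> \<le> x} = space M" for n
      using le by (auto intro: order_trans)
    with True show ?thesis
      unfolding cdf_X by (simp add: cdf_def measure_return prob_space)
  next
    case False
    with small[of x] show ?thesis
      unfolding cdf_X by (simp add: cdf_def measure_return)
  qed
qed

lemma tendsto_0_by_approximation: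
  fixes f :: "nat \<Rightarrow> real"
  assumes nonneg: "\<And>n. 0 \<le> f n"
    and approx: "\<And>e. 0 < e \<Longrightarrow> \<exists>g. g \<longlonglongrightarrow> 0 \<and> eventually (\<lambda>n. f n \<le> e + g n) sequentially"
  shows "f \<longlonglongrightarrow> 0"
  unfolding tendsto_iff
proof (intro allI impI)
  fix e :: real assume e: "0 < e"
  then obtain g where g: "g \<longlonglongrightarrow> 0" "eventually (\<lambda>n. f n \<le> e / 2 + g n) sequentially"
    using approx[of "e / 2"] by auto
  have "eventually (\<lambda>n. dist (g n) 0 < e / 2) sequentially"
    using tendstoD[OF g(1) half_gt_zero[OF e]] .
  with g(2) show "eventually (\<lambda>n. dist (f n) 0 < e) sequentially"
  proof eventually_elim
    case (elim n)
    then show ?case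
      using nonneg[of n] by (simp add: dist_real_def)
  qed
qed

lemma Max_div_tendsto_0:
  fixes h :: "nat \<Rightarrow> real"
  assumes "(\<lambda>j. h j / real j) \<longlonglongrightarrow> 0"
  shows "(\<lambda>n. Max (h ` {1..n}) / real n) \<longlonglongrightarrow> 0"
  unfolding tendsto_iff
proof (intro allI impI)
  fix e :: real assume e: "0 < e"
  have "eventually (\<lambda>j. dist (h j / real j) 0 < e / 2) sequentially"
    using tendstoD[OF assms half_gt_zero[OF e]] .
  then obtain j0 where j0: "\<And>j. j0 \<le> j \<Longrightarrow> \<bar>h j\<bar> / real j < e / 2"
    by (auto simp: eventually_sequentially dist_real_def abs_divide)
  define C where "C = (\<Sum>j\<in>{1..j0}. \<bar>h j\<bar>)"
  have C: "0 \<le> C"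
    unfolding C_def by (simp add: sum_nonneg)
  obtain n0 :: nat where n0: "2 * C / e < real n0"
    using reals_Archimedean2 by blast
  have main: "\<bar>Max (h ` {1..n}) / real n\<bar> < e" if n: "max 1 n0 \<le> n" for n
  proof -
    have bound: "\<bar>h j\<bar> \<le> C + e / 2 * real n" if j: "j \<in> {1..n}" for j
    proof (cases "j \<le> j0")
      case True
      then have "\<bar>h j\<bar> \<le> C"
        unfolding C_def using j by (intro member_le_sum) auto
      moreover have "0 \<le> e / 2 * real n"
        using e by simp
      ultimately show ?thesis
        by linarith
    next
      case False
      have "0 < real j"
        using j by simp
      then have "\<bar>h j\<bar> < e / 2 * real j"
        using j0[of j] False by (simp add: pos_divide_less_eq)
      also have "\<dots> \<le> e / 2 * real n"
        using j e by (intro mult_left_mono) auto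
      finally show ?thesis
        using C by linarith
    qed
    have "Max (h ` {1..n}) \<in> h ` {1..n}"
      using n by (intro Max_in) auto
    then obtain j where j: "j \<in> {1..n}" "Max (h ` {1..n}) = h j"
      by blast
    have "2 * C / e < real n"
      using n0 n by linarith
    then have "2 * C < real n * e"
      using e by (simp add: divide_less_eq)
    then have "\<bar>Max (h ` {1..n})\<bar> < e * real n"
      using bound[OF j(1)] j(2) by (simp add: algebra_simps)
    moreover have "0 < real n"
      using n by simp
    ultimately show ?thesis
      by (simp add: abs_divide divide_less_eq)
  qed
  then show "eventually (\<lambda>n. dist (Max (h ` {1..n}) / real n) 0 < e) sequentially"
    unfolding eventually_sequentially dist_real_def by (intro exI[of _ "max 1 n0"]) simp
qed

lemma filterlim_card_Int_atLeastAtMost: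
  assumes "infinite B"
  shows "filterlim (\<lambda>A. card (B \<inter> {1..A})) at_top sequentially"
  unfolding filterlim_at_top
proof
  fix n :: nat
  obtain D where D: "D \<subseteq> B - {0}" "finite D" "card D = n"
    using infinite_arbitrarily_large[of "B - {0}" n] assms by auto
  have "n \<le> card (B \<inter> {1..A})" if "Max (insert 0 D) \<le> A" for A
  proof -
    have "D \<subseteq> B \<inter> {1..A}"
      using D that by (auto dest: Max_ge[of "insert 0 D"])
    then show ?thesis
      using card_mono[of "B \<inter> {1..A}" D] D by simp
  qed
  then show "\<forall>\<^sub>F A in sequentially. n \<le> card (B \<inter> {1..A})"
    unfolding eventually_sequentially by blast
qed

lemma summable_SUP_majorant:
  fixes f :: "'a \<Rightarrow> nat \<Rightarrow> real"
  assumes "(\<Sum>k. (SUP i\<in>B. ennreal (f i k))) < \<infinity>"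
  obtains r where "summable r" "\<And>k. 0 \<le> r k" "\<And>i k. i \<in> B \<Longrightarrow> f i k \<le> r k"
proof
  define r where "r k = enn2real (SUP i\<in>B. ennreal (f i k))" for k
  show r_nonneg: "0 \<le> r k" for k
    by (simp add: r_def)
  have r: "(SUP i\<in>B. ennreal (f i k)) = ennreal (r k)" for k
    using ennreal_suminf_lessD[OF assms, of k] by (simp add: r_def less_top[symmetric])
  show "summable r"
    by (rule summable_suminf_not_top[OF r_nonneg]) (use assms r in auto)
  show "f i k \<le> r k" if "i \<in> B" for i k
  proof -
    have "ennreal (f i k) \<le> ennreal (r k)"
      unfolding r[symmetric] using that by (rule SUP_upper)
    then show ?thesis
      using r_nonneg[of k] by (metis ennreal_le_iff ennreal_leI le_cases order_trans)
  qed
qed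

section \<open>Independent exponential sojourn times\<close>

locale sojourn_model =
  fixes F :: "nat \<Rightarrow> nat \<Rightarrow> real" and X0 :: "nat \<Rightarrow> nat"
  assumes F_pos: "\<forall>i\<ge>1. \<forall>k\<ge>1. 0 < F i k" and X0_pos: "\<forall>i\<ge>1. 1 \<le> X0 i"
begin

definition sojourn :: "nat \<times> nat \<Rightarrow> real measure" where
  "sojourn = (\<lambda>(i, k). if 1 \<le> i \<and> X0 i \<le> k then density lborel (exponential_density (F i k))
     else return borel 0)"

lemma sojourn_law_eq: "sojourn_law F X0 = PiM UNIV sojourn"
  by (simp add: sojourn_law_def sojourn_def)

lemma F_pos_active: "1 \<le> i \<Longrightarrow> X0 i \<le> k \<Longrightarrow> 0 < F i k"
  using F_pos X0_pos by (meson order_trans)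

lemma prob_space_sojourn: "prob_space (sojourn x)"
  by (cases x) (auto simp: sojourn_def F_pos_active intro: prob_space_exponential_density prob_space_return)

lemma sets_sojourn [simp]: "sets (sojourn x) = sets borel"
  by (cases x) (auto simp: sojourn_def)

lemma space_sojourn [simp]: "space (sojourn x) = UNIV"
  using sets_eq_imp_space_eq[OF sets_sojourn[of x]] by simp

lemma product_prob_space_sojourn: "product_prob_space sojourn"
proof -
  interpret prob_space "sojourn x" for x
    by (rule prob_space_sojourn)
  show ?thesis
    by unfold_locales
qed

end

sublocale sojourn_model \<subseteq> prob_space "sojourn_law F X0"
  unfolding sojourn_law_eq by (rule prob_space_PiM) (rule prob_space_sojourn)

context sojourn_model
begin

abbreviation "M \<equiv> sojourn_law F X0"

lemma space_M [simp]: "space M = UNIV"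
  by (simp add: sojourn_law_eq space_PiM)

lemma measurable_coord_sojourn: "(\<lambda>\<omega>. \<omega> x) \<in> measurable M (sojourn x)"
  unfolding sojourn_law_eq by (rule measurable_component_singleton) simp

lemma borel_measurable_coord [measurable]: "(\<lambda>\<omega>. \<omega> x) \<in> borel_measurable M"
  using measurable_coord_sojourn[of x] by (simp add: measurable_cong_sets[OF refl sets_sojourn])

lemma distributed_coord:
  assumes "1 \<le> i" "X0 i \<le> k"
  shows "distributed M lborel (\<lambda>\<omega>. \<omega> (i, k)) (exponential_density (F i k))"
  unfolding distributed_def
proof (intro conjI)
  have "distr M (sojourn (i, k)) (\<lambda>\<omega>. \<omega> (i, k)) = sojourn (i, k)"
    unfolding sojourn_law_eq by (rule product_prob_space.PiM_component[OF product_prob_space_sojourn]) simp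
  then show "distr M lborel (\<lambda>\<omega>. \<omega> (i, k)) = density lborel (exponential_density (F i k))"
    using assms by (simp add: sojourn_def cong: distr_cong)
qed simp_all

lemma prob_coord_le:
  assumes "1 \<le> i" "X0 i \<le> k" "0 \<le> a"
  shows "prob {\<omega> \<in> space M. \<omega> (i, k) \<le> a} = 1 - exp (- a * F i k)"
  using exponential_distributedD_le[OF distributed_coord[OF assms(1,2)] assms(3) F_pos_active[OF assms(1,2)]]
  by simp

lemma prob_coord_gt:
  assumes "1 \<le> i" "X0 i \<le> k" "0 \<le> a"
  shows "prob {\<omega> \<in> space M. a < \<omega> (i, k)} = exp (- a * F i k)"
  using exponential_distributedD_gt[OF distributed_coord[OF assms(1,2)] assms(3) F_pos_active[OF assms(1,2)]]
  by simp

lemma prob_coord_le_bound: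
  assumes "1 \<le> i" "X0 i \<le> k" "0 \<le> a"
  shows "prob {\<omega> \<in> space M. \<omega> (i, k) \<le> a} \<le> a * F i k"
  using prob_coord_le[OF assms] exp_ge_add_one_self[of "- a * F i k"] by simp

lemma prob_coord_less_bound:
  assumes "1 \<le> i" "X0 i \<le> k" "0 \<le> a"
  shows "prob {\<omega> \<in> space M. \<omega> (i, k) < a} \<le> a * F i k"
proof -
  have "prob {\<omega> \<in> space M. \<omega> (i, k) < a} \<le> prob {\<omega> \<in> space M. \<omega> (i, k) \<le> a}"
  proof (rule finite_measure_mono)
    show "{\<omega> \<in> space M. \<omega> (i, k) \<le> a} \<in> events"
      by measurable
  qed auto
  also have "\<dots> \<le> a * F i k"
    using assms by (rule prob_coord_le_bound)
  finally show ?thesis .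
qed

lemma AE_sojourns_pos: "AE \<omega> in M. \<forall>i k. 1 \<le> i \<longrightarrow> X0 i \<le> k \<longrightarrow> 0 < \<omega> (i, k)"
  unfolding AE_all_countable
proof (intro allI)
  fix i k
  have "AE \<omega> in M. 0 < \<omega> (i, k)" if "1 \<le> i" "X0 i \<le> k"
    using AE_prob_1[of "{\<omega> \<in> space M. 0 < \<omega> (i, k)}"] prob_coord_gt[OF that order_refl] by simp
  then show "AE \<omega> in M. 1 \<le> i \<longrightarrow> X0 i \<le> k \<longrightarrow> 0 < \<omega> (i, k)"
    by (cases "1 \<le> i \<and> X0 i \<le> k") auto
qed

lemma nn_integral_coord:
  assumes ik: "1 \<le> i" "X0 i \<le> k"
  shows "(\<integral>\<^sup>+\<omega>. ennreal (\<omega> (i, k)) \<partial>M) = ennreal (1 / F i k)"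
proof -
  note d = distributed_coord[OF ik]
  have "integrable M (\<lambda>\<omega>. \<omega> (i, k))"
    using erlang_ith_moment_integrable[OF F_pos_active[OF ik] d, of 1] by simp
  moreover have "expectation (\<lambda>\<omega>. \<omega> (i, k)) = 1 / F i k"
    using erlang_ith_moment[OF F_pos_active[OF ik] d, of 1] by simp
  moreover have "AE \<omega> in M. 0 \<le> \<omega> (i, k)"
    using AE_sojourns_pos by eventually_elim (use ik in \<open>auto intro: less_imp_le\<close>)
  ultimately show ?thesis
    by (simp add: nn_integral_eq_integral)
qed

lemma indep_coords: "indep_vars sojourn (\<lambda>x \<omega>. \<omega> x) UNIV"
proof (subst indep_vars_iff_distr_eq_PiM)
  show "random_variable (sojourn x) (\<lambda>\<omega>. \<omega> x)" for x
    by (rule measurable_coord_sojourn)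
  have "(\<Pi>\<^sub>M x\<in>UNIV. distr M (sojourn x) (\<lambda>\<omega>. \<omega> x)) = (\<Pi>\<^sub>M x\<in>UNIV. sojourn x)"
    unfolding sojourn_law_eq using product_prob_space.PiM_component[OF product_prob_space_sojourn]
    by (intro PiM_cong) auto
  moreover have "distr M (PiM UNIV sojourn) (\<lambda>\<omega>. restrict \<omega> UNIV) = distr M (PiM UNIV sojourn) (\<lambda>\<omega>. \<omega>)"
    by (intro distr_cong) (auto simp: restrict_def)
  ultimately show "distr M (PiM UNIV sojourn) (\<lambda>\<omega>. \<lambda>x\<in>UNIV. \<omega> x) = (\<Pi>\<^sub>M x\<in>UNIV. distr M (sojourn x) (\<lambda>\<omega>. \<omega> x))"
    by (simp add: sojourn_law_eq)
qed simp

lemma prob_INT_blocks: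
  assumes L: "finite L" and K: "disjoint_family_on K L" and E: "\<And>l. l \<in> L \<Longrightarrow> E l \<in> events"
    and local: "\<And>l \<omega> \<omega>'. l \<in> L \<Longrightarrow> \<omega> \<in> E l \<Longrightarrow> (\<And>x. x \<in> K l \<Longrightarrow> \<omega>' x = \<omega> x) \<Longrightarrow> \<omega>' \<in> E l"
  shows "prob (\<Inter>l\<in>L. E l) = (\<Prod>l\<in>L. prob (E l))"
proof (cases "L = {}")
  case True
  then show ?thesis
    using prob_space by simp
next
  case False
  define ext where "ext J f = (\<lambda>x. if x \<in> J then f x else 0)" for J and f :: "nat \<times> nat \<Rightarrow> real"
  have ext_measurable: "ext J \<in> measurable (PiM J sojourn) M" for J
    unfolding sojourn_law_eq ext_def
  proof (rule measurable_PiM_single')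
    fix x
    show "(\<lambda>\<omega>. if x \<in> J then \<omega> x else 0) \<in> measurable (PiM J sojourn) (sojourn x)"
      by (cases "x \<in> J") (auto intro: measurable_component_singleton)
  qed auto
  define Y where "Y l = ext (K l) -` E l \<inter> space (PiM (K l) sojourn)" for l
  have Y: "Y l \<in> sets (PiM (K l) sojourn)" if "l \<in> L" for l
    unfolding Y_def by (rule measurable_sets[OF ext_measurable E[OF that]])
  have E_eq: "E l = (\<lambda>\<omega>. restrict \<omega> (K l)) -` Y l \<inter> space M" if "l \<in> L" for l
  proof -
    have "ext (K l) (restrict \<omega> (K l)) \<in> E l \<longleftrightarrow> \<omega> \<in> E l" for \<omega>
      using local[OF that, of \<omega> "ext (K l) (restrict \<omega> (K l))"]
        local[OF that, of "ext (K l) (restrict \<omega> (K l))" \<omega>] by (auto simp: ext_def)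
    then show ?thesis
      by (auto simp: Y_def space_PiM)
  qed
  have "indep_vars (\<lambda>l. PiM (K l) sojourn) (\<lambda>l \<omega>. restrict \<omega> (K l)) L"
    using indep_vars_restrict[OF indep_coords _ K] by simp
  from indep_varsD_finite[OF this False L Y]
  have "prob (\<Inter>l\<in>L. (\<lambda>\<omega>. restrict \<omega> (K l)) -` Y l \<inter> space M)
      = (\<Prod>l\<in>L. prob ((\<lambda>\<omega>. restrict \<omega> (K l)) -` Y l \<inter> space M))" .
  moreover have "(\<Inter>l\<in>L. E l) = (\<Inter>l\<in>L. (\<lambda>\<omega>. restrict \<omega> (K l)) -` Y l \<inter> space M)"
    using E_eq by auto
  moreover have "(\<Prod>l\<in>L. prob (E l)) = (\<Prod>l\<in>L. prob ((\<lambda>\<omega>. restrict \<omega> (K l)) -` Y l \<inter> space M))"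
    using E_eq by (intro prod.cong) auto
  ultimately show ?thesis
    by simp
qed

lemma prob_Int_blocks:
  assumes "J1 \<inter> J2 = {}" "E1 \<in> events" "E2 \<in> events"
    and "\<And>\<omega> \<omega>'. \<omega> \<in> E1 \<Longrightarrow> (\<And>x. x \<in> J1 \<Longrightarrow> \<omega>' x = \<omega> x) \<Longrightarrow> \<omega>' \<in> E1"
    and "\<And>\<omega> \<omega>'. \<omega> \<in> E2 \<Longrightarrow> (\<And>x. x \<in> J2 \<Longrightarrow> \<omega>' x = \<omega> x) \<Longrightarrow> \<omega>' \<in> E2"
  shows "prob (E1 \<inter> E2) = prob E1 * prob E2"
proof -
  have "prob (\<Inter>b\<in>{True, False}. if b then E1 else E2) = (\<Prod>b\<in>{True, False}. prob (if b then E1 else E2))"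
  proof (rule prob_INT_blocks[where K="\<lambda>b. if b then J1 else J2"])
    fix b \<omega> \<omega>'
    assume "\<omega> \<in> (if b then E1 else E2)" "\<And>x. x \<in> (if b then J1 else J2) \<Longrightarrow> \<omega>' x = \<omega> x"
    then show "\<omega>' \<in> (if b then E1 else E2)"
      using assms(4,5) by (cases b) simp_all
  qed (use assms(1-3) in \<open>auto simp: disjoint_family_on_def\<close>)
  then show ?thesis
    by (simp add: Int_commute)
qed

lemma prob_coords_all:
  assumes "finite L" "inj_on c L" "\<And>l. l \<in> L \<Longrightarrow> S l \<in> sets borel"
  shows "prob {\<omega> \<in> space M. \<forall>l\<in>L. \<omega> (c l) \<in> S l} = (\<Prod>l\<in>L. prob {\<omega> \<in> space M. \<omega> (c l) \<in> S l})"
proof -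
  have "{\<omega> \<in> space M. \<omega> (c l) \<in> S l} \<in> events" if "l \<in> L" for l
    using measurable_sets[OF borel_measurable_coord assms(3)[OF that]] by (simp add: vimage_def)
  then have "prob (\<Inter>l\<in>L. {\<omega> \<in> space M. \<omega> (c l) \<in> S l}) = (\<Prod>l\<in>L. prob {\<omega> \<in> space M. \<omega> (c l) \<in> S l})"
    using assms by (intro prob_INT_blocks[where K="\<lambda>l. {c l}"]) (auto simp: disjoint_family_on_def inj_on_eq_iff)
  moreover have "(\<Inter>l\<in>L. {\<omega> \<in> space M. \<omega> (c l) \<in> S l}) = {\<omega> \<in> space M. \<forall>l\<in>L. \<omega> (c l) \<in> S l}"
    by auto
  ultimately show ?thesis
    by simp
qed

lemma borel_measurable_jump_time_sojourn [measurable]: "(\<lambda>\<omega>. jump_time A X0 \<omega> n) \<in> borel_measurable M"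
  by (rule borel_measurable_jump_time) (rule borel_measurable_coord)

lemma pred_urn_final_eq_initial [measurable]: "Measurable.pred M (\<lambda>\<omega>. urn_final A X0 \<omega> i = enat (X0 i))"
  unfolding urn_final_eq_initial_iff by measurable

lemma prob_initial_sojourns_le_ge:
  assumes b: "1 \<le> b" and a: "0 \<le> a" and c: "0 < c" and F: "\<And>l. X0 b \<le> l \<Longrightarrow> c \<le> F b l"
  shows "(1 - exp (- a * c)) ^ N \<le> prob {\<omega> \<in> space M. \<forall>l\<in>{X0 b..<X0 b + N}. \<omega> (b, l) \<le> a}"
proof -
  have "(1 - exp (- a * c)) ^ N = (\<Prod>l\<in>{X0 b..<X0 b + N}. 1 - exp (- a * c))"
    by simp
  also have "\<dots> \<le> (\<Prod>l\<in>{X0 b..<X0 b + N}. prob {\<omega> \<in> space M. \<omega> (b, l) \<in> {..a}})"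
  proof (rule prod_mono)
    fix l assume l: "l \<in> {X0 b..<X0 b + N}"
    have "a * c \<le> a * F b l"
      using F l a by (intro mult_left_mono) auto
    then show "0 \<le> 1 - exp (- a * c) \<and> 1 - exp (- a * c) \<le> prob {\<omega> \<in> space M. \<omega> (b, l) \<in> {..a}}"
      using prob_coord_le[of b l a] a c b l by auto
  qed
  also have "\<dots> = prob {\<omega> \<in> space M. \<forall>l\<in>{X0 b..<X0 b + N}. \<omega> (b, l) \<in> {..a}}"
    by (rule prob_coords_all[symmetric]) (auto intro: inj_onI)
  finally show ?thesis
    by simp
qed

lemma prob_tail_less_ge_half:
  assumes b: "1 \<le> b" "X0 b \<le> n" and e: "0 < e"
    and S: "(\<Sum>i. ennreal (1 / F b (n + i))) \<le> ennreal (e / 2)"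
  shows "1 / 2 \<le> prob {\<omega> \<in> space M. (\<Sum>i. ennreal (\<omega> (b, n + i))) < ennreal e}"
proof (rule prob_less_ge_half[OF _ e])
  have "(\<integral>\<^sup>+\<omega>. (\<Sum>i. ennreal (\<omega> (b, n + i))) \<partial>M) = (\<Sum>i. \<integral>\<^sup>+\<omega>. ennreal (\<omega> (b, n + i)) \<partial>M)"
    by (rule nn_integral_suminf) measurable
  also have "\<dots> = (\<Sum>i. ennreal (1 / F b (n + i)))"
    using b by (intro suminf_cong nn_integral_coord) auto
  finally show "(\<integral>\<^sup>+\<omega>. (\<Sum>i. ennreal (\<omega> (b, n + i))) \<partial>M) \<le> ennreal (e / 2)"
    using S by simp
qed measurable

lemma prob_explosion_less_ge:
  assumes b: "1 \<le> b" and c: "0 < c" "\<And>l. X0 b \<le> l \<Longrightarrow> c \<le> F b l"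
    and a: "0 \<le> a" "real N * a \<le> \<epsilon> / 2" and eps: "0 < \<epsilon>"
    and tail_sum: "(\<Sum>i. ennreal (1 / F b (X0 b + N + i))) \<le> ennreal (\<epsilon> / 4)"
  shows "(1 - exp (- a * c)) ^ N / 2 \<le> prob {\<omega> \<in> space M. explosion_time (X0 b) (\<lambda>l. \<omega> (b, l)) < ennreal \<epsilon>}"
proof -
  define front where "front = {\<omega> \<in> space M. \<forall>l\<in>{X0 b..<X0 b + N}. \<omega> (b, l) \<le> a}"
  define tail where "tail = {\<omega> \<in> space M. (\<Sum>i. ennreal (\<omega> (b, X0 b + N + i))) < ennreal (\<epsilon> / 2)}"
  have "(1 - exp (- a * c)) ^ N \<le> prob front"
    unfolding front_def using b a c by (intro prob_initial_sojourns_le_ge) auto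
  moreover have "1 / 2 \<le> prob tail"
    unfolding tail_def using b eps tail_sum X0_pos by (intro prob_tail_less_ge_half) auto
  moreover have "prob (front \<inter> tail) = prob front * prob tail"
  proof (rule prob_Int_blocks[of "{b} \<times> {X0 b..<X0 b + N}" "{b} \<times> {X0 b + N..}"])
    show "front \<in> events" "tail \<in> events"
      unfolding front_def tail_def by measurable
  next
    fix \<omega> \<omega>' assume "\<omega> \<in> front" "\<And>x. x \<in> {b} \<times> {X0 b..<X0 b + N} \<Longrightarrow> \<omega>' x = \<omega> x"
    then show "\<omega>' \<in> front"
      by (simp add: front_def)
  next
    fix \<omega> \<omega>' assume "\<omega> \<in> tail" "\<And>x. x \<in> {b} \<times> {X0 b + N..} \<Longrightarrow> \<omega>' x = \<omega> x"
    then show "\<omega>' \<in> tail"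
      by (simp add: tail_def)
  qed auto
  moreover have "prob (front \<inter> tail) \<le> prob {\<omega> \<in> space M. explosion_time (X0 b) (\<lambda>l. \<omega> (b, l)) < ennreal \<epsilon>}"
  proof (rule finite_measure_mono_AE)
    show "AE \<omega> in M. \<omega> \<in> front \<inter> tail \<longrightarrow>
        \<omega> \<in> {\<omega> \<in> space M. explosion_time (X0 b) (\<lambda>l. \<omega> (b, l)) < ennreal \<epsilon>}"
      using AE_sojourns_pos
    proof eventually_elim
      case (elim \<omega>)
      then have "\<forall>k\<ge>X0 b. 0 \<le> \<omega> (b, k)"
        using b by (auto intro: less_imp_le)
      then show ?case
        using explosion_time_less_if_short[OF _ eps _ a(2)] by (auto simp: front_def tail_def)
    qed
  qed measurable
  ultimately show ?thesis
    using mult_mono[of "(1 - exp (- a * c)) ^ N" "prob front" "1 / 2" "prob tail"] by simp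
qed

text \<open>Uniformly in \<open>b \<in> B\<close>: with probability bounded below, the first \<open>N\<close> sojourns of \<open>b\<close> are all
  short, and independently, with probability at least \<open>1/2\<close>, the remaining ones sum to little,
  because the summable majorant of \<open>1 / F b\<close> makes their expected sum uniformly small.\<close>

lemma uniform_prob_explosion_less:
  assumes B_sub: "B \<subseteq> {1..}" and B_sum: "(\<Sum>k. (SUP i\<in>B. ennreal (1 / F i (Suc k)))) < \<infinity>"
    and eps: "0 < \<epsilon>"
  shows "\<exists>p>0. \<forall>b\<in>B. p \<le> prob {\<omega> \<in> space M. explosion_time (X0 b) (\<lambda>l. \<omega> (b, l)) < ennreal \<epsilon>}"
proof -
  obtain r where r: "summable r" "\<And>k. 0 \<le> r k" and F_inv: "\<And>b k. b \<in> B \<Longrightarrow> 1 / F b (Suc k) \<le> r k"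
    using summable_SUP_majorant[OF B_sum] by blast
  define C where "C = 1 + suminf r"
  have C: "0 < C"
    using suminf_nonneg[OF r] by (simp add: C_def)
  have F_ge: "1 / C \<le> F b l" if "b \<in> B" "X0 b \<le> l" for b l
  proof -
    have "1 / F b l \<le> r (l - 1)"
      using F_inv[OF that(1), of "l - 1"] X0_pos that B_sub by (auto simp: Suc_diff_1)
    also have "\<dots> < C"
      using sum_le_suminf[OF r(1), of "{l - 1}"] r(2) by (simp add: C_def)
    finally show ?thesis
      using F_pos_active that B_sub C by (auto simp: field_simps)
  qed
  obtain N where N: "\<forall>n\<ge>N. norm (\<Sum>i. r (i + n)) < \<epsilon> / 4"
    using suminf_exist_split[OF _ r(1), of "\<epsilon> / 4"] eps by auto
  define a where "a = \<epsilon> / (2 * (real N + 1))"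
  have a: "0 < a" "real N * a \<le> \<epsilon> / 2"
    using eps by (simp_all add: a_def field_simps)
  have tail_sum: "(\<Sum>i. ennreal (1 / F b (X0 b + N + i))) \<le> ennreal (\<epsilon> / 4)" if b: "b \<in> B" for b
  proof -
    have idx: "X0 b + N + i = Suc (i + (X0 b + N - 1))" for i
      using b B_sub X0_pos by auto
    have "(\<Sum>i. ennreal (1 / F b (X0 b + N + i))) \<le> (\<Sum>i. ennreal (r (i + (X0 b + N - 1))))"
      by (intro suminf_le ennreal_leI) (auto simp only: idx intro: F_inv[OF b])
    also have "\<dots> = ennreal (\<Sum>i. r (i + (X0 b + N - 1)))"
      by (rule suminf_ennreal2) (use r summable_ignore_initial_segment[OF r(1)] in auto)
    also have "\<dots> \<le> ennreal (\<epsilon> / 4)"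
    proof (intro ennreal_leI)
      have "N \<le> X0 b + N - 1"
        using b B_sub X0_pos by auto
      then have "norm (\<Sum>i. r (i + (X0 b + N - 1))) < \<epsilon> / 4"
        by (rule N[rule_format])
      then show "(\<Sum>i. r (i + (X0 b + N - 1))) \<le> \<epsilon> / 4"
        by (simp add: abs_less_iff)
    qed
    finally show ?thesis .
  qed
  show ?thesis
  proof (intro exI[of _ "(1 - exp (- a * (1 / C))) ^ N / 2"] conjI ballI)
    show "0 < (1 - exp (- a * (1 / C))) ^ N / 2"
      using a C by simp
    fix b assume b: "b \<in> B"
    then show "(1 - exp (- a * (1 / C))) ^ N / 2
        \<le> prob {\<omega> \<in> space M. explosion_time (X0 b) (\<lambda>l. \<omega> (b, l)) < ennreal \<epsilon>}"
      using B_sub C a eps F_ge tail_sum by (intro prob_explosion_less_ge) auto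
  qed
qed

definition none_explodes_before :: "nat set \<Rightarrow> nat \<Rightarrow> real \<Rightarrow> (nat \<times> nat \<Rightarrow> real) set" where
  "none_explodes_before B A \<delta> =
     {\<omega> \<in> space M. \<forall>b\<in>B \<inter> {1..A}. ennreal \<delta> \<le> explosion_time (X0 b) (\<lambda>l. \<omega> (b, l))}"

lemma sets_none_explodes_before [measurable]: "none_explodes_before B A \<delta> \<in> events"
  unfolding none_explodes_before_def
proof (rule sets.sets_Collect_finite_All)
  fix b
  show "{\<omega> \<in> space M. ennreal \<delta> \<le> explosion_time (X0 b) (\<lambda>l. \<omega> (b, l))} \<in> events"
    by measurable
qed simp

lemma prob_none_explodes_before_tendsto_0:
  assumes B_sub: "B \<subseteq> {1..}" and B_inf: "infinite B"
    and B_sum: "(\<Sum>k. (SUP i\<in>B. ennreal (1 / F i (Suc k)))) < \<infinity>" and eps: "0 < \<epsilon>"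
  shows "(\<lambda>A. prob (none_explodes_before B A \<epsilon>)) \<longlonglongrightarrow> 0"
proof -
  obtain p where p: "0 < p" "\<forall>b\<in>B. p \<le> prob {\<omega> \<in> space M. explosion_time (X0 b) (\<lambda>l. \<omega> (b, l)) < ennreal \<epsilon>}"
    using uniform_prob_explosion_less[OF B_sub B_sum eps] by blast
  define late where "late b = {\<omega> \<in> space M. ennreal \<epsilon> \<le> explosion_time (X0 b) (\<lambda>l. \<omega> (b, l))}" for b
  have late_events: "late b \<in> events" for b
    unfolding late_def by measurable
  have prob_late: "prob (late b) = 1 - prob {\<omega> \<in> space M. explosion_time (X0 b) (\<lambda>l. \<omega> (b, l)) < ennreal \<epsilon>}" for b
    unfolding late_def not_less[symmetric] by (rule prob_neg) measurable
  obtain b0 where "b0 \<in> B"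
    using B_inf by (metis finite.emptyI ex_in_conv)
  then have p1: "p \<le> 1"
    using p(2) prob_le_1 by (meson order_trans)
  have bound: "prob (none_explodes_before B A \<epsilon>) \<le> (1 - p) ^ card (B \<inter> {1..A})" for A
  proof -
    have "none_explodes_before B A \<epsilon> = (\<Inter>b\<in>B \<inter> {1..A}. late b)"
      by (auto simp: none_explodes_before_def late_def)
    also have "prob \<dots> = (\<Prod>b\<in>B \<inter> {1..A}. prob (late b))"
    proof (rule prob_INT_blocks[where K="\<lambda>b. {b} \<times> UNIV"])
      fix b \<omega> \<omega>' assume "\<omega> \<in> late b" "\<And>x. x \<in> {b} \<times> UNIV \<Longrightarrow> \<omega>' x = \<omega> x"
      then show "\<omega>' \<in> late b"
        by (simp add: late_def)
    qed (auto simp: disjoint_family_on_def late_events)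
    also have "\<dots> \<le> (\<Prod>b\<in>B \<inter> {1..A}. 1 - p)"
      using p(2) by (intro prod_mono) (auto simp: prob_late)
    finally show ?thesis
      by simp
  qed
  have lim: "(\<lambda>A. (1 - p) ^ card (B \<inter> {1..A})) \<longlonglongrightarrow> 0"
    by (rule filterlim_compose[OF LIMSEQ_power_zero filterlim_card_Int_atLeastAtMost[OF B_inf]])
      (use p p1 in auto)
  show ?thesis
    by (rule tendsto_sandwich[OF _ _ tendsto_const lim]) (simp, rule always_eventually, use bound in blast)
qed

section \<open>The three limit laws\<close>

lemma AE_stays_unless_none_explodes_before:
  "AE \<omega> in M. \<forall>A i \<delta>. \<omega> \<notin> none_explodes_before B A \<delta> \<longrightarrow> \<delta> \<le> \<omega> (i, X0 i) \<longrightarrow>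
     urn_final A X0 \<omega> i = enat (X0 i)"
  using AE_sojourns_pos
proof eventually_elim
  case (elim \<omega>)
  show ?case
  proof (intro allI impI)
    fix A i \<delta>
    assume "\<omega> \<notin> none_explodes_before B A \<delta>" and \<delta>: "\<delta> \<le> \<omega> (i, X0 i)"
    then obtain b where b: "b \<in> {1..A}" "explosion_time (X0 b) (\<lambda>l. \<omega> (b, l)) < ennreal \<delta>"
      by (auto simp: none_explodes_before_def not_le)
    then have "explosion_time (X0 b) (\<lambda>l. \<omega> (b, l)) \<le> ennreal (\<omega> (i, X0 i))"
      using ennreal_leI[OF \<delta>] by simp
    then show "urn_final A X0 \<omega> i = enat (X0 i)"
      by (rule urn_final_eq_initial_if_explosion_le[rotated 2]) (use elim b in auto)
  qed
qed

lemma prob_urn_final_eq_initial_tendsto_1: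
  assumes B_sub: "B \<subseteq> {1..}" and B_inf: "infinite B"
    and B_sum: "(\<Sum>k. (SUP i\<in>B. ennreal (1 / F i (Suc k)))) < \<infinity>" and i: "1 \<le> i"
  shows "(\<lambda>A. prob {\<omega> \<in> space M. urn_final A X0 \<omega> i = enat (X0 i)}) \<longlonglongrightarrow> 1"
proof -
  define moved where "moved A = {\<omega> \<in> space M. urn_final A X0 \<omega> i \<noteq> enat (X0 i)}" for A
  have "(\<lambda>A. prob (moved A)) \<longlonglongrightarrow> 0"
  proof (rule tendsto_0_by_approximation)
    fix e :: real assume e: "0 < e"
    define \<delta> where "\<delta> = e / F i (X0 i)"
    have F: "0 < F i (X0 i)"
      using F_pos_active i by simp
    then have \<delta>: "0 < \<delta>" "\<delta> * F i (X0 i) = e"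
      using e by (simp_all add: \<delta>_def)
    have bound: "prob (moved A) \<le> e + prob (none_explodes_before B A \<delta>)" for A
    proof -
      have "AE \<omega> in M. \<omega> \<in> moved A \<longrightarrow> \<omega> \<in> {\<omega> \<in> space M. \<omega> (i, X0 i) \<le> \<delta>} \<union> none_explodes_before B A \<delta>"
        using AE_stays_unless_none_explodes_before[of B]
        by eventually_elim (metis (mono_tags, lifting) Un_iff mem_Collect_eq moved_def nle_le)
      then have "prob (moved A) \<le> prob ({\<omega> \<in> space M. \<omega> (i, X0 i) \<le> \<delta>} \<union> none_explodes_before B A \<delta>)"
        by (rule finite_measure_mono_AE) measurable
      also have "\<dots> \<le> prob {\<omega> \<in> space M. \<omega> (i, X0 i) \<le> \<delta>} + prob (none_explodes_before B A \<delta>)"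
        by (rule measure_Un_le) measurable
      also have "prob {\<omega> \<in> space M. \<omega> (i, X0 i) \<le> \<delta>} \<le> e"
        using prob_coord_le_bound[OF i order_refl, of \<delta>] \<delta> by simp
      finally show ?thesis
        by simp
    qed
    show "\<exists>g. g \<longlonglongrightarrow> 0 \<and> eventually (\<lambda>A. prob (moved A) \<le> e + g A) sequentially"
      using prob_none_explodes_before_tendsto_0[OF B_sub B_inf B_sum \<delta>(1)] bound
      by (intro exI conjI always_eventually allI)
  qed simp
  then have "(\<lambda>A. 1 - prob (moved A)) \<longlonglongrightarrow> 1 - 0"
    by (intro tendsto_diff tendsto_const)
  moreover have "prob (moved A) = 1 - prob {\<omega> \<in> space M. urn_final A X0 \<omega> i = enat (X0 i)}" for A
    unfolding moved_def by (rule prob_neg) measurable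
  ultimately show ?thesis
    by simp
qed

lemma prob_stay_fraction_le:
  assumes \<delta>: "0 < \<delta>" and A: "1 \<le> A" and x: "x < 1"
  shows "prob {\<omega> \<in> space M. real (card {i\<in>{1..A}. urn_final A X0 \<omega> i = enat (X0 i)}) / real A \<le> x}
    \<le> prob (none_explodes_before B A \<delta>)
      + (\<Sum>i\<in>{1..A}. prob {\<omega> \<in> space M. \<omega> (i, X0 i) < \<delta>}) / ((1 - x) * real A)"
proof -
  define short where "short i = {\<omega> \<in> space M. \<omega> (i, X0 i) < \<delta>}" for i
  define many_short where "many_short = {\<omega> \<in> space M. (1 - x) * real A \<le> real (card {i\<in>{1..A}. \<omega> \<in> short i})}"
  have short_events: "short i \<in> events" for i
    unfolding short_def by measurable
  have many_short_events: "many_short \<in> events"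
    unfolding many_short_def short_def by measurable
  define few_stay where
    "few_stay = {\<omega> \<in> space M. real (card {i\<in>{1..A}. urn_final A X0 \<omega> i = enat (X0 i)}) / real A \<le> x}"
  have "AE \<omega> in M. \<omega> \<in> few_stay \<longrightarrow> \<omega> \<in> none_explodes_before B A \<delta> \<union> many_short"
    using AE_stays_unless_none_explodes_before[of B]
  proof eventually_elim
    case (elim \<omega>)
    show ?case
    proof (intro impI)
      assume "\<omega> \<in> few_stay"
      then have le_x: "real (card {i\<in>{1..A}. urn_final A X0 \<omega> i = enat (X0 i)}) / real A \<le> x"
        by (simp add: few_stay_def)
      show "\<omega> \<in> none_explodes_before B A \<delta> \<union> many_short"
      proof (cases "\<omega> \<in> none_explodes_before B A \<delta>")
        case False
        have "{1..A} \<subseteq> {i\<in>{1..A}. urn_final A X0 \<omega> i = enat (X0 i)} \<union> {i\<in>{1..A}. \<omega> \<in> short i}"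
          using elim False by (auto simp: short_def not_less)
        then have "card {1..A} \<le> card ({i\<in>{1..A}. urn_final A X0 \<omega> i = enat (X0 i)} \<union> {i\<in>{1..A}. \<omega> \<in> short i})"
          by (intro card_mono) auto
        also have "\<dots> \<le> card {i\<in>{1..A}. urn_final A X0 \<omega> i = enat (X0 i)} + card {i\<in>{1..A}. \<omega> \<in> short i}"
          by (rule card_Un_le)
        finally have "real A \<le> real (card {i\<in>{1..A}. urn_final A X0 \<omega> i = enat (X0 i)})
            + real (card {i\<in>{1..A}. \<omega> \<in> short i})"
          by simp
        moreover have "real (card {i\<in>{1..A}. urn_final A X0 \<omega> i = enat (X0 i)}) \<le> x * real A"
          using le_x A by (simp add: divide_le_eq)
        ultimately have "(1 - x) * real A \<le> real (card {i\<in>{1..A}. \<omega> \<in> short i})"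
          by (simp add: algebra_simps)
        then show ?thesis
          by (simp add: many_short_def)
      qed simp
    qed
  qed
  then have "prob few_stay \<le> prob (none_explodes_before B A \<delta> \<union> many_short)"
    by (rule finite_measure_mono_AE) (use many_short_events in auto)
  also have "\<dots> \<le> prob (none_explodes_before B A \<delta>) + prob many_short"
    by (rule measure_Un_le) (use many_short_events in auto)
  also have "prob many_short \<le> (\<Sum>i\<in>{1..A}. prob (short i)) / ((1 - x) * real A)"
    unfolding many_short_def using short_events x A by (intro prob_card_ge_le) auto
  finally show ?thesis
    by (simp add: few_stay_def short_def)
qed

lemma sum_prob_short_first_sojourn_le:
  assumes L: "\<forall>i\<ge>i0. F i (X0 i) \<le> L" "0 \<le> L" and \<delta>: "0 \<le> \<delta>"
  shows "(\<Sum>i\<in>{1..A}. prob {\<omega> \<in> space M. \<omega> (i, X0 i) < \<delta>}) \<le> real i0 + real A * (L * \<delta>)"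
proof -
  have "prob {\<omega> \<in> space M. \<omega> (i, X0 i) < \<delta>} \<le> (if i < i0 then 1 else 0) + L * \<delta>" if i: "i \<in> {1..A}" for i
  proof (cases "i < i0")
    case False
    have "prob {\<omega> \<in> space M. \<omega> (i, X0 i) < \<delta>} \<le> \<delta> * F i (X0 i)"
      using i \<delta> by (intro prob_coord_less_bound) auto
    also have "\<dots> \<le> \<delta> * L"
      using L False \<delta> by (intro mult_left_mono) auto
    finally show ?thesis
      using False by (simp add: mult.commute)
  next
    case True
    have "0 \<le> L * \<delta>"
      using L(2) \<delta> by simp
    with True show ?thesis
      by (simp add: add_increasing2)
  qed
  then have "(\<Sum>i\<in>{1..A}. prob {\<omega> \<in> space M. \<omega> (i, X0 i) < \<delta>})
      \<le> (\<Sum>i\<in>{1..A}. (if i < i0 then 1 else 0) + L * \<delta>)"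
    by (rule sum_mono)
  also have "\<dots> = real (card ({1..A} \<inter> {..<i0})) + real A * (L * \<delta>)"
    by (simp add: sum.distrib sum.If_cases Int_def)
  also have "card ({1..A} \<inter> {..<i0}) \<le> i0"
    using card_mono[of "{..<i0}" "{1..A} \<inter> {..<i0}"] by simp
  finally show ?thesis
    by simp
qed

lemma stay_fraction_weak_conv_1:
  assumes B_sub: "B \<subseteq> {1..}" and B_inf: "infinite B"
    and B_sum: "(\<Sum>k. (SUP i\<in>B. ennreal (1 / F i (Suc k)))) < \<infinity>"
    and bounded: "limsup (\<lambda>i. ereal (F i (X0 i))) < \<infinity>"
  shows "weak_conv_m
    (\<lambda>A. distr M borel (\<lambda>\<omega>. real (card {i\<in>{1..A}. urn_final A X0 \<omega> i = enat (X0 i)}) / real A))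
    (return borel 1)"
proof (rule weak_conv_m_return)
  show "(\<lambda>\<omega>. real (card {i\<in>{1..A}. urn_final A X0 \<omega> i = enat (X0 i)}) / real A) \<in> borel_measurable M" for A
    by measurable
  show "real (card {i\<in>{1..A}. urn_final A X0 \<omega> i = enat (X0 i)}) / real A \<le> 1" for A \<omega>
  proof -
    have "card {i\<in>{1..A}. urn_final A X0 \<omega> i = enat (X0 i)} \<le> card {1..A}"
      by (rule card_mono) auto
    then show ?thesis
      by (cases "A = 0") (auto simp: divide_le_eq_1)
  qed
  fix x :: real assume x: "x < 1"
  obtain n :: nat where "limsup (\<lambda>i. ereal (F i (X0 i))) < ereal (real n)"
    using bounded less_PInf_Ex_of_nat by auto
  then have "eventually (\<lambda>i. ereal (F i (X0 i)) < ereal (real n)) sequentially"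
    by (rule Limsup_lessD)
  then obtain i0 where "\<forall>i\<ge>i0. F i (X0 i) < real n"
    unfolding eventually_sequentially by auto
  then have i0: "\<forall>i\<ge>i0. F i (X0 i) \<le> real n"
    by (auto intro: less_imp_le)
  show "(\<lambda>A. prob {\<omega> \<in> space M. real (card {i\<in>{1..A}. urn_final A X0 \<omega> i = enat (X0 i)}) / real A \<le> x})
      \<longlonglongrightarrow> 0"
  proof (rule tendsto_0_by_approximation)
    fix e :: real assume e: "0 < e"
    define \<delta> where "\<delta> = e * (1 - x) / (real n + 1)"
    have \<delta>_pos: "0 < \<delta>"
      using e x by (simp add: \<delta>_def)
    then have "real n * \<delta> \<le> (real n + 1) * \<delta>"
      by simp
    also have "\<dots> = e * (1 - x)"
      unfolding \<delta>_def by simp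
    finally have \<delta>: "0 < \<delta>" "real n * \<delta> / (1 - x) \<le> e"
      using \<delta>_pos x by (simp_all add: pos_divide_le_eq)
    define g where "g A = prob (none_explodes_before B A \<delta>) + real i0 / (1 - x) / real A" for A
    have "g \<longlonglongrightarrow> 0 + 0"
      unfolding g_def by (intro tendsto_add prob_none_explodes_before_tendsto_0[OF B_sub B_inf B_sum \<delta>(1)]
        tendsto_divide_0[OF tendsto_const] filterlim_at_top_imp_at_infinity filterlim_real_sequentially)
    moreover have "prob {\<omega> \<in> space M. real (card {i\<in>{1..A}. urn_final A X0 \<omega> i = enat (X0 i)}) / real A \<le> x}
        \<le> e + g A" if A: "1 \<le> A" for A
    proof -
      have "(\<Sum>i\<in>{1..A}. prob {\<omega> \<in> space M. \<omega> (i, X0 i) < \<delta>}) / ((1 - x) * real A)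
          \<le> (real i0 + real A * (real n * \<delta>)) / ((1 - x) * real A)"
        using sum_prob_short_first_sojourn_le[OF i0 _ less_imp_le[OF \<delta>(1)], of A] x A
        by (intro divide_right_mono) auto
      also have "\<dots> = real i0 / (1 - x) / real A + real n * \<delta> / (1 - x)"
        using x A by (simp add: add_divide_distrib divide_divide_eq_left mult.commute)
      finally show ?thesis
        using prob_stay_fraction_le[OF \<delta>(1) A x, of B] \<delta>(2) unfolding g_def by linarith
    qed
    ultimately show "\<exists>g. g \<longlonglongrightarrow> 0 \<and> eventually (\<lambda>A. prob {\<omega> \<in> space M.
        real (card {i\<in>{1..A}. urn_final A X0 \<omega> i = enat (X0 i)}) / real A \<le> x} \<le> e + g A) sequentially"
      unfolding eventually_sequentially by auto
  qed simp
qed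

lemma prob_first_sojourns_gt_le:
  assumes "finite I" and I: "\<And>i. i \<in> I \<Longrightarrow> 1 \<le> i \<and> c \<le> F i (X0 i)" and s: "0 \<le> s"
  shows "prob {\<omega> \<in> space M. \<forall>i\<in>I. s < \<omega> (i, X0 i)} \<le> exp (- c * s * real (card I))"
proof -
  have "prob {\<omega> \<in> space M. \<forall>i\<in>I. \<omega> (i, X0 i) \<in> {s<..}} = (\<Prod>i\<in>I. prob {\<omega> \<in> space M. \<omega> (i, X0 i) \<in> {s<..}})"
    using assms(1) by (rule prob_coords_all) (auto simp: inj_on_def)
  also have "\<dots> = (\<Prod>i\<in>I. exp (- s * F i (X0 i)))"
    using I s prob_coord_gt by (intro prod.cong refl) simp
  also have "\<dots> \<le> (\<Prod>i\<in>I. exp (- c * s))"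
  proof (rule prod_mono)
    fix i assume "i \<in> I"
    then have "s * c \<le> s * F i (X0 i)"
      using I s by (intro mult_left_mono) auto
    then show "0 \<le> exp (- s * F i (X0 i)) \<and> exp (- s * F i (X0 i)) \<le> exp (- c * s)"
      by (simp add: mult.commute)
  qed
  also have "\<dots> = exp (- c * s * real (card I))"
    by (simp add: exp_of_nat_mult[symmetric] mult.commute)
  finally show ?thesis
    by simp
qed

text \<open>Split \<open>K\<close> disjoint blocks of \<open>m\<close> agents off \<open>{i0..A}\<close>: if fewer than \<open>K\<close> first sojourns are at
  most \<open>s\<close>, one block has all its first sojourns longer than \<open>s\<close>.\<close>

lemma prob_few_short_first_sojourns:
  assumes c: "0 < c" and i0: "1 \<le> i0" and F_ge: "\<forall>i\<ge>i0. c \<le> F i (X0 i)" and s: "0 \<le> s"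
    and blocks: "i0 + K * m \<le> A + 1"
  shows "prob {\<omega> \<in> space M. card {i\<in>{1..A}. \<omega> (i, X0 i) \<le> s} < K} \<le> real K * exp (- c * s * real m)"
proof -
  define block where "block r = {i0 + r * m..<i0 + r * m + m}" for r
  define all_long where "all_long r = {\<omega> \<in> space M. \<forall>i\<in>block r. s < \<omega> (i, X0 i)}" for r
  have block_sub: "block r \<subseteq> {1..A}" if "r < K" for r
  proof -
    have "(r + 1) * m \<le> K * m"
      using that by (intro mult_right_mono) auto
    then show ?thesis
      using i0 blocks by (auto simp: block_def algebra_simps)
  qed
  have block_disj: "r = r'" if "i \<in> block r" "i \<in> block r'" for i r r'
  proof -
    have "r = (i - i0) div m" "r' = (i - i0) div m"
      using that by (auto simp: block_def mult.commute intro!: div_nat_eqI[symmetric])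
    then show ?thesis
      by simp
  qed
  have all_long_events: "all_long r \<in> events" for r
    unfolding all_long_def by (rule sets.sets_Collect_finite_All) (measurable, simp add: block_def)
  have "{\<omega> \<in> space M. card {i\<in>{1..A}. \<omega> (i, X0 i) \<le> s} < K} \<subseteq> (\<Union>r<K. all_long r)"
  proof
    fix \<omega> assume few: "\<omega> \<in> {\<omega> \<in> space M. card {i\<in>{1..A}. \<omega> (i, X0 i) \<le> s} < K}"
    show "\<omega> \<in> (\<Union>r<K. all_long r)"
    proof (rule ccontr)
      assume "\<omega> \<notin> (\<Union>r<K. all_long r)"
      then have hit: "\<exists>i\<in>block r. \<omega> (i, X0 i) \<le> s" if "r < K" for r
        using that by (auto simp: all_long_def not_less)
      have "K \<le> card {i\<in>{1..A}. \<omega> (i, X0 i) \<le> s}"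
      proof (rule card_ge_if_disjoint_blocks_hit)
        show "\<And>r. r < K \<Longrightarrow> block r \<subseteq> {1..A}"
          by (rule block_sub)
        show "\<And>r r' i. i \<in> block r \<Longrightarrow> i \<in> block r' \<Longrightarrow> r = r'"
          by (rule block_disj)
        show "\<And>r. r < K \<Longrightarrow> \<exists>i\<in>block r. \<omega> (i, X0 i) \<le> s"
          by (rule hit)
      qed simp
      with few show False
        by simp
    qed
  qed
  then have "prob {\<omega> \<in> space M. card {i\<in>{1..A}. \<omega> (i, X0 i) \<le> s} < K} \<le> prob (\<Union>r<K. all_long r)"
    using all_long_events by (intro finite_measure_mono) auto
  also have "\<dots> \<le> (\<Sum>r<K. prob (all_long r))"
    using all_long_events by (intro finite_measure_subadditive_finite) auto
  also have "\<dots> \<le> (\<Sum>r<K. exp (- c * s * real m))"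
    unfolding all_long_def using F_ge i0 s
    by (intro sum_mono order.trans[OF prob_first_sojourns_gt_le]) (auto simp: block_def)
  finally show ?thesis
    by simp
qed

lemma sum_prob_low_rank_fast_le:
  assumes K: "1 \<le> K" and s: "0 \<le> s" and H: "0 \<le> H" "\<forall>j\<in>{1..A}. F j (Suc (X0 j)) \<le> H"
  shows "(\<Sum>j\<in>{1..A}. prob ({\<omega> \<in> space M. card {i\<in>{1..A} - {j}. \<omega> (i, X0 i) \<le> \<omega> (j, X0 j)} < K - 1}
      \<inter> {\<omega> \<in> space M. \<omega> (j, Suc (X0 j)) < s})) \<le> (real K - 1) * (s * H)"
proof -
  define low_rank where
    "low_rank j = {\<omega> \<in> space M. card {i\<in>{1..A} - {j}. \<omega> (i, X0 i) \<le> \<omega> (j, X0 j)} < K - 1}" for j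
  define fast where "fast j = {\<omega> \<in> space M. \<omega> (j, Suc (X0 j)) < s}" for j
  have events: "low_rank j \<in> events" "fast j \<in> events" for j
    unfolding low_rank_def fast_def by measurable
  have "prob (low_rank j \<inter> fast j) \<le> prob (low_rank j) * (s * H)" if j: "j \<in> {1..A}" for j
  proof -
    have "prob (low_rank j \<inter> fast j) = prob (low_rank j) * prob (fast j)"
    proof (rule prob_Int_blocks[of "{x. snd x = X0 (fst x)}" "{(j, Suc (X0 j))}"])
      fix \<omega> \<omega>' assume "\<omega> \<in> low_rank j" "\<And>x. x \<in> {x. snd x = X0 (fst x)} \<Longrightarrow> \<omega>' x = \<omega> x"
      then show "\<omega>' \<in> low_rank j"
        by (simp add: low_rank_def)
    next
      fix \<omega> \<omega>' assume "\<omega> \<in> fast j" "\<And>x. x \<in> {(j, Suc (X0 j))} \<Longrightarrow> \<omega>' x = \<omega> x"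
      then show "\<omega>' \<in> fast j"
        by (simp add: fast_def)
    qed (use events in auto)
    also have "prob (fast j) \<le> s * F j (Suc (X0 j))"
      unfolding fast_def using j s by (intro prob_coord_less_bound) auto
    also have "\<dots> \<le> s * H"
      using H j s by (intro mult_left_mono) auto
    finally show ?thesis
      by (simp add: mult_left_mono)
  qed
  then have "(\<Sum>j\<in>{1..A}. prob (low_rank j \<inter> fast j)) \<le> (\<Sum>j\<in>{1..A}. prob (low_rank j) * (s * H))"
    by (rule sum_mono)
  also have "\<dots> = s * H * (\<Sum>j\<in>{1..A}. prob (low_rank j))"
    by (simp add: sum_distrib_left mult.commute)
  also have "\<dots> \<le> s * H * (real K - 1)"
  proof (intro mult_left_mono)
    show "(\<Sum>j\<in>{1..A}. prob (low_rank j)) \<le> real K - 1"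
    proof (rule sum_prob_le_if_card_le)
      fix \<omega>
      have "card {j\<in>{1..A}. \<omega> \<in> low_rank j} \<le> K - 1"
        using card_low_rank_le[of "{1..A}" "\<lambda>i. \<omega> (i, X0 i)" K] by (simp add: low_rank_def)
      then show "real (card {j\<in>{1..A}. \<omega> \<in> low_rank j}) \<le> real K - 1"
        using K by linarith
    qed (use events in auto)
  qed (use s H in auto)
  finally show ?thesis
    by (simp add: low_rank_def fast_def mult.commute)
qed

lemma prob_few_moved_le:
  assumes K: "1 \<le> K" and c: "0 < c" and i0: "1 \<le> i0" and F_ge: "\<forall>i\<ge>i0. c \<le> F i (X0 i)"
    and s: "0 < s" and blocks: "i0 + K * m \<le> A + 1"
    and H: "0 \<le> H" "\<forall>j\<in>{1..A}. F j (Suc (X0 j)) \<le> H"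
  shows "prob {\<omega> \<in> space M. card {i\<in>{1..A}. urn_final A X0 \<omega> i \<noteq> enat (X0 i)} < K}
    \<le> real K * exp (- c * s * real m) + (real K - 1) * (s * H)"
proof -
  define low_rank_fast where "low_rank_fast j =
    {\<omega> \<in> space M. card {i\<in>{1..A} - {j}. \<omega> (i, X0 i) \<le> \<omega> (j, X0 j)} < K - 1}
      \<inter> {\<omega> \<in> space M. \<omega> (j, Suc (X0 j)) < s}" for j
  define few_short where "few_short = {\<omega> \<in> space M. card {i\<in>{1..A}. \<omega> (i, X0 i) \<le> s} < K}"
  define few_moved where
    "few_moved = {\<omega> \<in> space M. card {i\<in>{1..A}. urn_final A X0 \<omega> i \<noteq> enat (X0 i)} < K}"
  have events: "low_rank_fast j \<in> events" "few_short \<in> events" "few_moved \<in> events" for j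
    unfolding low_rank_fast_def few_short_def few_moved_def by measurable
  have "AE \<omega> in M. \<omega> \<in> few_moved \<longrightarrow> \<omega> \<in> few_short \<union> (\<Union>j\<in>{1..A}. low_rank_fast j)"
    using AE_sojourns_pos
  proof eventually_elim
    case (elim \<omega>)
    show ?case
    proof (rule impI, rule ccontr)
      assume "\<omega> \<in> few_moved" "\<omega> \<notin> few_short \<union> (\<Union>j\<in>{1..A}. low_rank_fast j)"
      moreover have "K \<le> card {i\<in>{1..A}. urn_final A X0 \<omega> i \<noteq> enat (X0 i)}"
        if "K \<le> card {i\<in>{1..A}. \<omega> (i, X0 i) \<le> s}"
          "\<forall>j\<in>{1..A}. \<not> (card {i\<in>{1..A} - {j}. \<omega> (i, X0 i) \<le> \<omega> (j, X0 j)} < K - 1 \<and> \<omega> (j, Suc (X0 j)) < s)"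
        using card_moved_ge[OF _ K s that] elim by auto
      ultimately show False
        by (auto simp: few_moved_def few_short_def low_rank_fast_def not_less)
    qed
  qed
  then have "prob few_moved \<le> prob (few_short \<union> (\<Union>j\<in>{1..A}. low_rank_fast j))"
    by (rule finite_measure_mono_AE) (use events in auto)
  also have "\<dots> \<le> prob few_short + prob (\<Union>j\<in>{1..A}. low_rank_fast j)"
    by (rule measure_Un_le) (use events in auto)
  also have "prob (\<Union>j\<in>{1..A}. low_rank_fast j) \<le> (\<Sum>j\<in>{1..A}. prob (low_rank_fast j))"
    by (rule finite_measure_subadditive_finite) (use events in auto)
  also have "\<dots> \<le> (real K - 1) * (s * H)"
    unfolding low_rank_fast_def using K s H by (intro sum_prob_low_rank_fast_le) auto
  also have "prob few_short \<le> real K * exp (- c * s * real m)"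
    unfolding few_short_def using prob_few_short_first_sojourns[OF c i0 F_ge _ blocks] s by simp
  finally show ?thesis
    by (simp add: few_moved_def)
qed

text \<open>The choice \<open>s = 2 K y / (c A)\<close> with blocks of \<open>m \<ge> A / (2 K)\<close> agents makes \<open>c s m \<ge> y\<close>.\<close>

lemma prob_few_moved_le_rescaled:
  assumes K: "1 \<le> K" and c: "0 < c" and i0: "1 \<le> i0" "\<forall>i\<ge>i0. c \<le> F i (X0 i)" and y: "0 < y"
    and A: "2 * (i0 + K) \<le> A"
  shows "prob {\<omega> \<in> space M. card {i\<in>{1..A}. urn_final A X0 \<omega> i \<noteq> enat (X0 i)} < K}
    \<le> real K * exp (- y) + (real K - 1) * (2 * real K * y / c) * (Max ((\<lambda>j. F j (Suc (X0 j))) ` {1..A}) / real A)"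
proof -
  define H where "H = Max ((\<lambda>j. F j (Suc (X0 j))) ` {1..A})"
  have A1: "1 \<le> A"
    using A K by simp
  have H: "\<forall>j\<in>{1..A}. F j (Suc (X0 j)) \<le> H"
    unfolding H_def by simp
  then have "F 1 (Suc (X0 1)) \<le> H"
    using A1 by simp
  moreover have "0 < F 1 (Suc (X0 1))"
    by (rule F_pos_active) auto
  ultimately have H0: "0 \<le> H"
    by simp
  obtain d where d: "A = i0 + d"
    using A le_iff_add[of i0 A] by auto
  define m where "m = d div K"
  define r where "r = d mod K"
  have dm: "d = K * m + r" and r: "r < K"
    using K by (simp_all add: m_def r_def)
  have blocks: "i0 + K * m \<le> A + 1"
    using d dm by linarith
  have "A \<le> 2 * (K * m)"
    using A d dm r by (simp only: dm d) presburger
  then have "real A \<le> real (2 * (K * m))"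
    by (rule of_nat_mono)
  then have "1 \<le> 2 * real K * real m / real A"
    using A1 by simp
  then have "y * 1 \<le> y * (2 * real K * real m / real A)"
    using y by (intro mult_left_mono) auto
  also have "\<dots> = c * (2 * real K * y / c / real A) * real m"
    using c by simp
  finally have "real K * exp (- c * (2 * real K * y / c / real A) * real m) \<le> real K * exp (- y)"
    by (intro mult_left_mono) auto
  moreover have "0 < 2 * real K * y / c / real A"
    using K y c A1 by simp
  from prob_few_moved_le[OF K c i0 this blocks H0 H]
  have "prob {\<omega> \<in> space M. card {i\<in>{1..A}. urn_final A X0 \<omega> i \<noteq> enat (X0 i)} < K}
    \<le> real K * exp (- c * (2 * real K * y / c / real A) * real m) + (real K - 1) * (2 * real K * y / c / real A * H)" .
  ultimately show ?thesis
    by (simp add: H_def)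
qed

lemma prob_many_moved_tendsto_1:
  assumes pos: "liminf (\<lambda>i. ereal (F i (X0 i))) > 0"
    and sublinear: "(\<lambda>i. F i (X0 i + 1) / real i) \<longlonglongrightarrow> 0"
  shows "(\<lambda>A. prob {\<omega> \<in> space M. K \<le> card {i\<in>{1..A}. urn_final A X0 \<omega> i \<noteq> enat (X0 i)}}) \<longlonglongrightarrow> 1"
proof (cases "K = 0")
  case True
  then show ?thesis
    using prob_space by simp
next
  case False
  then have K: "1 \<le> K"
    by simp
  obtain c where c: "0 < ereal c" "ereal c < liminf (\<lambda>i. ereal (F i (X0 i)))"
    using ereal_dense2[OF pos] by blast
  from less_LiminfD[OF c(2)] obtain i1 where "\<forall>i\<ge>i1. ereal c < ereal (F i (X0 i))"
    unfolding eventually_sequentially by auto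
  then obtain i0 where i0: "1 \<le> i0" "\<forall>i\<ge>i0. c \<le> F i (X0 i)"
    by (intro that[of "max 1 i1"]) (auto intro: less_imp_le)
  define few where "few A = {\<omega> \<in> space M. card {i\<in>{1..A}. urn_final A X0 \<omega> i \<noteq> enat (X0 i)} < K}" for A
  have "(\<lambda>A. prob (few A)) \<longlonglongrightarrow> 0"
  proof (rule tendsto_0_by_approximation)
    fix e :: real assume e: "0 < e"
    define y where "y = real K / e"
    have y: "0 < y"
      using K e by (simp add: y_def)
    have "real K * exp (- y) = real K / exp y"
      by (simp add: exp_minus field_simps)
    also have "\<dots> \<le> real K / y"
    proof (intro divide_left_mono)
      show "y \<le> exp y"
        using exp_ge_add_one_self[of y] by linarith
    qed (use y in auto)
    also have "\<dots> = e"
      using K e by (simp add: y_def)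
    finally have "real K * exp (- y) \<le> e" .
    then have "eventually (\<lambda>A. prob (few A) \<le> e + (real K - 1) * (2 * real K * y / c)
        * (Max ((\<lambda>j. F j (Suc (X0 j))) ` {1..A}) / real A)) sequentially"
      unfolding few_def using prob_few_moved_le_rescaled[OF K _ i0 y] c(1)
      by (intro eventually_sequentiallyI[of "2 * (i0 + K)"]) force
    moreover have "(\<lambda>A. (real K - 1) * (2 * real K * y / c) * (Max ((\<lambda>j. F j (Suc (X0 j))) ` {1..A}) / real A))
        \<longlonglongrightarrow> 0"
      using sublinear by (intro tendsto_mult_right_zero Max_div_tendsto_0) simp
    ultimately show "\<exists>g. g \<longlonglongrightarrow> 0 \<and> eventually (\<lambda>A. prob (few A) \<le> e + g A) sequentially"
      by blast
  qed simp
  then have "(\<lambda>A. 1 - prob (few A)) \<longlonglongrightarrow> 1 - 0"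
    by (intro tendsto_diff tendsto_const)
  moreover have "prob (few A) = 1 - prob {\<omega> \<in> space M. K \<le> card {i\<in>{1..A}. urn_final A X0 \<omega> i \<noteq> enat (X0 i)}}" for A
    unfolding few_def not_le[symmetric] by (rule prob_neg) measurable
  ultimately show ?thesis
    by simp
qed

end

theorem theorem5:
  fixes F :: "nat \<Rightarrow> nat \<Rightarrow> real" and X0 :: "nat \<Rightarrow> nat" and B :: "nat set"
  assumes F_pos: "\<forall>i\<ge>1. \<forall>k\<ge>1. 0 < F i k"
    and X0_pos: "\<forall>i\<ge>1. 1 \<le> X0 i"
    and B_sub: "B \<subseteq> {1..}" and B_inf: "infinite B"
    and B_sum: "(\<Sum>k. (SUP i\<in>B. ennreal (1 / F i (Suc k)))) < \<infinity>"
  shows "(((\<lambda>A. measure (sojourn_law F X0)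
              {tau \<in> space (sojourn_law F X0). urn_final A X0 tau 1 = enat (X0 1)})
            \<longlongrightarrow> 1) at_top) \<and>
         (limsup (\<lambda>i. ereal (F i (X0 i))) < \<infinity> \<longrightarrow>
           weak_conv_m
             (\<lambda>A. distr (sojourn_law F X0) borel
                (\<lambda>tau. real (card {i\<in>{1..A}. urn_final A X0 tau i = enat (X0 i)}) / real A))
             (return borel 1)) \<and>
         (liminf (\<lambda>i. ereal (F i (X0 i))) > 0 \<longrightarrow>
         ((\<lambda>i. F i (X0 i + 1) / real i) \<longlonglongrightarrow> 0) \<longrightarrow>
         (\<forall>K::nat. ((\<lambda>A. measure (sojourn_law F X0)
              {tau \<in> space (sojourn_law F X0).
                 K \<le> card {i\<in>{1..A}. urn_final A X0 tau i \<noteq> enat (X0 i)}}) \<longlongrightarrow> 1) at_top))"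
proof -
  interpret sojourn_model F X0
    using F_pos X0_pos by unfold_locales
  show ?thesis
    using prob_urn_final_eq_initial_tendsto_1[OF B_sub B_inf B_sum order_refl]
      stay_fraction_weak_conv_1[OF B_sub B_inf B_sum] prob_many_moved_tendsto_1
    by blast
qed

end
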